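(* Let $\mathcal G_1,\mathcal G_2$ be finite graphs. Suppose there exist $\beta_1,\beta_2\in(0,\infty)$ such that \[ \lim_{n\to\infty}\frac{\log s_n(W(\mathcal G_i))}{n\log n}=\beta_i \quad\text{for } i=1,2 . \] Then \[ \lim_{n\to\infty}\frac{\log s_n(W(\mathcal G_1\star\mathcal G_2))}{n\log n}=\max\{\beta_1,\beta_2\}. \] Furthermore, if at least one of $\mathcal G_1,\mathcal G_2$ is not complete, then \[ \gamma(\mathcal G_1\star\mathcal G_2)=\max(\gamma(\mathcal G_1),\gamma(\mathcal G_2)). \]
   Context: Graphs are finite simple graphs. $W(\mathcal G)$ is the right-angled Coxeter group \[ \langle \sigma_v,\ v\in\mathcal G\mid \sigma_v^2=1,\ \sigma_v\sigma_w=\sigma_w\sigma_v \text{ for adjacent } v,w\rangle . \] $s_n(\Gamma)$ is the number of subgroups of index exactly $n$ in $\Gamma$. The join $\mathcal G_1\star\mathcal G_2$ is the graph on the disjoint union of the vertex sets. Two vertices in the same $\mathcal G_i$ are adjacent iff they are adjacent in $\mathcal G_i$, and any two vertices in different $\mathcal G_i$ are adjacent. In particular $W(\mathcal G_1\star\mathcal G_2)=W(\mathcal G_1)\times W(\mathcal G_2)$. A clique collection is an induced subgraph whose connected components are complete graphs. For a clique collection $\mathcal C$ with components $\mathcal C_1,\dots,\mathcal C_q$, set $w(\mathcal C)=\sum_i(1-2^{-|\mathcal C_i|})$. Then $\gamma(\mathcal G)$ is the maximum of $w(\mathcal C)$ over all clique collections $\mathcal C$ of $\mathcal G$. *)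

theory Defs
  imports "HOL-Analysis.Analysis" "HOL-Algebra.Coset"
begin

text \<open>A finite simple graph is a pair (V, E) of a vertex set and a symmetric irreflexive
  adjacency predicate; only its restriction to V matters.\<close>

type_synonym 'a graph = "'a set \<times> ('a \<Rightarrow> 'a \<Rightarrow> bool)"

definition verts :: "'a graph \<Rightarrow> 'a set" where "verts G = fst G"
definition adj :: "'a graph \<Rightarrow> 'a \<Rightarrow> 'a \<Rightarrow> bool" where "adj G = snd G"

definition finite_simple_graph :: "'a graph \<Rightarrow> bool" where
  "finite_simple_graph G \<longleftrightarrow> finite (verts G) \<and>
     (\<forall>v\<in>verts G. \<forall>w\<in>verts G. adj G v w \<longleftrightarrow> adj G w v) \<and>
     (\<forall>v\<in>verts G. \<not> adj G v v)"

definition complete_graph :: "'a graph \<Rightarrow> bool" where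
  "complete_graph G \<longleftrightarrow> (\<forall>v\<in>verts G. \<forall>w\<in>verts G. v \<noteq> w \<longrightarrow> adj G v w)"

fun join_adj :: "('a \<Rightarrow> 'a \<Rightarrow> bool) \<Rightarrow> ('b \<Rightarrow> 'b \<Rightarrow> bool) \<Rightarrow> 'a + 'b \<Rightarrow> 'a + 'b \<Rightarrow> bool" where
  "join_adj E1 E2 (Inl a) (Inl b) = E1 a b"
| "join_adj E1 E2 (Inr a) (Inr b) = E2 a b"
| "join_adj E1 E2 (Inl a) (Inr b) = True"
| "join_adj E1 E2 (Inr a) (Inl b) = True"

definition graph_join :: "'a graph \<Rightarrow> 'b graph \<Rightarrow> ('a + 'b) graph" where
  "graph_join G1 G2 = (Inl ` verts G1 \<union> Inr ` verts G2, join_adj (adj G1) (adj G2))"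

inductive word_eq :: "'a graph \<Rightarrow> 'a list \<Rightarrow> 'a list \<Rightarrow> bool" for G where
  refl: "word_eq G xs xs"
| sym: "word_eq G xs ys \<Longrightarrow> word_eq G ys xs"
| trans: "word_eq G xs ys \<Longrightarrow> word_eq G ys zs \<Longrightarrow> word_eq G xs zs"
| square: "v \<in> verts G \<Longrightarrow> word_eq G (xs @ [v, v] @ ys) (xs @ ys)"
| commute: "v \<in> verts G \<Longrightarrow> w \<in> verts G \<Longrightarrow> adj G v w \<Longrightarrow>
              word_eq G (xs @ [v, w] @ ys) (xs @ [w, v] @ ys)"

definition words :: "'a graph \<Rightarrow> 'a list set" where
  "words G = {xs. set xs \<subseteq> verts G}"

definition word_rel :: "'a graph \<Rightarrow> ('a list \<times> 'a list) set" where
  "word_rel G = {(xs, ys). xs \<in> words G \<and> ys \<in> words G \<and> word_eq G xs ys}"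

definition RACG :: "'a graph \<Rightarrow> 'a list set monoid" where
  "RACG G = \<lparr> carrier = words G // word_rel G,
              mult = (\<lambda>X Y. \<Union>x\<in>X. \<Union>y\<in>Y. word_rel G `` {x @ y}),
              one = word_rel G `` {[]} \<rparr>"

definition num_subgroups_index :: "('g, 'm) monoid_scheme \<Rightarrow> nat \<Rightarrow> nat" where
  "num_subgroups_index Gr n = card {H. subgroup H Gr \<and> finite (rcosets\<^bsub>Gr\<^esub> H) \<and> card (rcosets\<^bsub>Gr\<^esub> H) = n}"

definition induced_component :: "'a graph \<Rightarrow> 'a set \<Rightarrow> 'a \<Rightarrow> 'a set" where
  "induced_component G C x =
     {y \<in> C. (x, y) \<in> ({(u, v). u \<in> C \<and> v \<in> C \<and> adj G u v})\<^sup>*}"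

definition induced_components :: "'a graph \<Rightarrow> 'a set \<Rightarrow> 'a set set" where
  "induced_components G C = induced_component G C ` C"

definition clique_collection :: "'a graph \<Rightarrow> 'a set \<Rightarrow> bool" where
  "clique_collection G C \<longleftrightarrow> C \<subseteq> verts G \<and>
     (\<forall>K\<in>induced_components G C. \<forall>v\<in>K. \<forall>w\<in>K. v \<noteq> w \<longrightarrow> adj G v w)"

definition cc_weight :: "'a graph \<Rightarrow> 'a set \<Rightarrow> real" where
  "cc_weight G C = (\<Sum>K\<in>induced_components G C. 1 - 2 powi (- int (card K)))"

definition gamma :: "'a graph \<Rightarrow> real" where
  "gamma G = Max (cc_weight G ` {C. clique_collection G C})"

end

theory Submission
  imports Defs "HOL-Real_Asymp.Real_Asymp"
begin

text \<open>
  \<open>W(G1 \<star> G2)\<close> is the direct product \<open>W(G1) \<times> W(G2)\<close>. Each factor is a quotient of the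
  product, so \<open>s_n\<close> of the product dominates \<open>s_n\<close> of either factor. Conversely, a subgroup \<open>H\<close>
  of index \<open>n\<close> in \<open>K1 \<times> K2\<close> is determined by \<open>L = H \<inter> K1\<close>, by \<open>Q = p2(H)\<close> and by the cosets of
  \<open>L\<close> that \<open>H\<close> assigns to the Schreier generators of \<open>Q\<close>. As \<open>[K1:L][K2:Q] \<le> n\<close>, this bounds
  \<open>s_n(K1 \<times> K2)\<close> by the sum of \<open>s_m(K1) s_a(K2) m^(a |S|)\<close> over \<open>m a \<le> n\<close>, where \<open>S\<close> generates
  \<open>K2\<close>. A sum of at most \<open>n\<^sup>2\<close> terms, each at most \<open>exp((max \<beta>1 \<beta>2 + \<epsilon>) n log n + O(n))\<close>, has
  growth rate at most \<open>max \<beta>1 \<beta>2\<close>.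

  A clique collection of the join either lies in one side, or meets both sides and is then a
  single clique of weight below \<open>1\<close>; a non-complete graph has \<open>\<gamma> \<ge> 1\<close>, witnessed by two
  non-adjacent vertices.
\<close>

section \<open>Subgroups of finite index\<close>

definition subgroups_of_index :: "('g, 'm) monoid_scheme \<Rightarrow> nat \<Rightarrow> 'g set set" where
  "subgroups_of_index K n =
     {H. subgroup H K \<and> finite (rcosets\<^bsub>K\<^esub> H) \<and> card (rcosets\<^bsub>K\<^esub> H) = n}"

lemma num_subgroups_index_eq_card: "num_subgroups_index K n = card (subgroups_of_index K n)"
  by (simp add: num_subgroups_index_def subgroups_of_index_def)

lemma (in group) rcos_eq_iff:
  assumes "subgroup H G" "a \<in> carrier G" "b \<in> carrier G"
  shows "H #> a = H #> b \<longleftrightarrow> a \<otimes> inv b \<in> H"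
proof
  assume "H #> a = H #> b"
  then have "a \<in> H #> b" using rcos_self[OF assms(2,1)] by simp
  then show "a \<otimes> inv b \<in> H" by (rule subgroup.rcos_module_imp[OF assms(1) is_group assms(3)])
next
  assume "a \<otimes> inv b \<in> H"
  then have "a \<in> H #> b" by (rule subgroup.rcos_module_rev[OF assms(1) is_group assms(3,2)])
  then show "H #> a = H #> b" using repr_independence[OF _ assms(3,1)] by simp
qed

lemma (in group) mult_inv_mem_iff:
  assumes "subgroup H G" "u \<in> H" "v \<in> carrier G"
  shows "v \<otimes> inv u \<in> H \<longleftrightarrow> v \<in> H"
  using subgroup.rcos_module[OF assms(1) is_group subgroup.mem_carrier[OF assms(1,2)] assms(3)]
    coset_join2[OF subgroup.mem_carrier[OF assms(1,2)] assms(1,2)] by simp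

lemma (in group) inv_mult_cancel_left: "x \<in> carrier G \<Longrightarrow> y \<in> carrier G \<Longrightarrow> inv x \<otimes> (x \<otimes> y) = y"
  by (simp add: m_assoc[symmetric])

lemma (in group) rcos_eq_self_iff:
  assumes "subgroup H G" "a \<in> carrier G"
  shows "H #> a = H \<longleftrightarrow> a \<in> H"
  using coset_join1[of H a] coset_join2[of a H] assms by blast

lemma (in group) rcosetsE:
  assumes "C \<in> rcosets H"
  obtains a where "a \<in> carrier G" "C = H #> a"
  using assms unfolding RCOSETS_def by auto

lemma (in group) rcosets_ne: "subgroup H G \<Longrightarrow> rcosets H \<noteq> {}"
  using rcosetsI[OF subgroup.subset one_closed] by blast

lemma (in group) rcos_in_rcosets:
  assumes "subgroup H G" "C \<in> rcosets H" "s \<in> carrier G"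
  shows "C #> s \<in> rcosets H"
proof -
  obtain a where "a \<in> carrier G" "C = H #> a" using assms(2) by (rule rcosetsE)
  then show ?thesis
    using assms coset_mult_assoc[OF subgroup.subset] rcosetsI[OF subgroup.subset] by auto
qed

definition word_prod :: "('g, 'm) monoid_scheme \<Rightarrow> 'g list \<Rightarrow> 'g" where
  "word_prod K w = foldr (\<otimes>\<^bsub>K\<^esub>) w \<one>\<^bsub>K\<^esub>"

lemma word_prod_Nil [simp]: "word_prod K [] = \<one>\<^bsub>K\<^esub>"
  by (simp add: word_prod_def)

lemma word_prod_Cons [simp]: "word_prod K (s # w) = s \<otimes>\<^bsub>K\<^esub> word_prod K w"
  by (simp add: word_prod_def)

lemma (in monoid) word_prod_closed: "set w \<subseteq> carrier G \<Longrightarrow> word_prod G w \<in> carrier G"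
  by (induction w) auto

text \<open>Generation without inverses, which suffices here: the generators of a right-angled Coxeter
  group are involutions.\<close>

definition monoid_generated_by :: "('g, 'm) monoid_scheme \<Rightarrow> 'g set \<Rightarrow> bool" where
  "monoid_generated_by K S \<longleftrightarrow>
     S \<subseteq> carrier K \<and> (\<forall>k\<in>carrier K. \<exists>w. set w \<subseteq> S \<and> k = word_prod K w)"

text \<open>An element lies in \<open>H\<close> iff it fixes the trivial coset; the labellings transport this test
  along words in the generators.\<close>

lemma (in group) subgroup_eq_if_coset_actions_agree:
  assumes gen: "monoid_generated_by G S" and H: "subgroup H G" and H': "subgroup H' G"
    and inj: "inj_on e (rcosets H)" "inj_on e' (rcosets H')"
    and base: "e H = e' H'"
    and step: "\<And>C C' s. C \<in> rcosets H \<Longrightarrow> C' \<in> rcosets H' \<Longrightarrow> s \<in> S \<Longrightarrow> e C = e' C'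
      \<Longrightarrow> e (C #> s) = e' (C' #> s)"
  shows "H = H'"
proof -
  have S: "S \<subseteq> carrier G" using gen by (simp add: monoid_generated_by_def)
  have H_in: "H \<in> rcosets H" "H' \<in> rcosets H'"
    using rcosetsI[OF subgroup.subset[OF H] one_closed] rcosetsI[OF subgroup.subset[OF H'] one_closed]
      coset_mult_one[OF subgroup.subset[OF H]] coset_mult_one[OF subgroup.subset[OF H']] by simp_all
  have walk: "e (C #> word_prod G w) = e' (C' #> word_prod G w)"
    if "C \<in> rcosets H" "C' \<in> rcosets H'" "e C = e' C'" "set w \<subseteq> S" for C C' w
    using that
  proof (induction w arbitrary: C C')
    case Nil
    then show ?case using subgroup.rcosets_carrier[OF H is_group] subgroup.rcosets_carrier[OF H' is_group]
      by simp
  next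
    case (Cons s w)
    have s: "s \<in> carrier G" and w: "word_prod G w \<in> carrier G"
      using Cons.prems S by (auto intro: word_prod_closed)
    have "e ((C #> s) #> word_prod G w) = e' ((C' #> s) #> word_prod G w)"
      using Cons.IH rcos_in_rcosets[OF H Cons.prems(1) s] rcos_in_rcosets[OF H' Cons.prems(2) s]
        step[OF Cons.prems(1,2)] Cons.prems(3,4) by simp
    then show ?case
      using coset_mult_assoc[OF subgroup.rcosets_carrier[OF _ is_group] s w] H H' Cons.prems by simp
  qed
  have "k \<in> H \<longleftrightarrow> k \<in> H'" if k: "k \<in> carrier G" for k
  proof -
    obtain w where w: "set w \<subseteq> S" "k = word_prod G w" using gen k by (auto simp: monoid_generated_by_def)
    have "k \<in> H \<longleftrightarrow> e (H #> k) = e H"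
      using rcos_eq_self_iff[OF H k] inj_on_eq_iff[OF inj(1) rcos_in_rcosets[OF H H_in(1) k] H_in(1)]
      by simp
    also have "\<dots> \<longleftrightarrow> e' (H' #> k) = e' H'" using walk[OF H_in base w(1)] w(2) base by simp
    also have "\<dots> \<longleftrightarrow> k \<in> H'"
      using rcos_eq_self_iff[OF H' k] inj_on_eq_iff[OF inj(2) rcos_in_rcosets[OF H' H_in(2) k] H_in(2)]
      by simp
    finally show ?thesis .
  qed
  then show "H = H'" using subgroup.subset[OF H] subgroup.subset[OF H'] by blast
qed

lemma (in group) finite_subgroups_of_index:
  assumes gen: "monoid_generated_by G S" and "finite S"
  shows "finite (subgroups_of_index G m)"
proof -
  define e where "e H = (SOME e. bij_betw e (rcosets H) {0..<m})" for H
  define table where "table H =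
    (e H H, restrict (\<lambda>(i, s). e H (inv_into (rcosets H) (e H) i #> s)) ({0..<m} \<times> S))" for H
  have S: "S \<subseteq> carrier G" using gen by (simp add: monoid_generated_by_def)
  have e: "bij_betw (e H) (rcosets H) {0..<m}" if "H \<in> subgroups_of_index G m" for H
  proof -
    have "\<exists>e. bij_betw e (rcosets H) {0..<m}"
      using that ex_bij_betw_finite_nat[of "rcosets H"] by (auto simp: subgroups_of_index_def)
    then show ?thesis unfolding e_def by (rule someI_ex)
  qed
  have H_in: "H \<in> rcosets H" if "H \<in> subgroups_of_index G m" for H
    using that rcosetsI[OF subgroup.subset one_closed, of H] coset_mult_one[OF subgroup.subset, of H]
    by (simp add: subgroups_of_index_def)
  have table_step: "snd (table H) (e H C, s) = e H (C #> s)"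
    if "H \<in> subgroups_of_index G m" "C \<in> rcosets H" "s \<in> S" for H C s
    using e[OF that(1)] that(2,3) by (auto simp: table_def bij_betw_def)
  have "inj_on table (subgroups_of_index G m)"
  proof (rule inj_onI)
    fix H H' assume H: "H \<in> subgroups_of_index G m" and H': "H' \<in> subgroups_of_index G m"
      and eq: "table H = table H'"
    show "H = H'"
    proof (rule subgroup_eq_if_coset_actions_agree[OF gen])
      show "subgroup H G" "subgroup H' G" using H H' by (simp_all add: subgroups_of_index_def)
      show "inj_on (e H) (rcosets H)" "inj_on (e H') (rcosets H')"
        using e[OF H] e[OF H'] by (simp_all add: bij_betw_def)
      show "e H H = e H' H'" using eq by (simp add: table_def)
      show "e H (C #> s) = e H' (C' #> s)"
        if "C \<in> rcosets H" "C' \<in> rcosets H'" "s \<in> S" "e H C = e H' C'" for C C' s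
        using table_step[OF H that(1,3)] table_step[OF H' that(2,3)] eq that(4) by simp
    qed
  qed
  moreover have "table H \<in> {0..<m} \<times> (({0..<m} \<times> S) \<rightarrow>\<^sub>E {0..<m})"
    if H: "H \<in> subgroups_of_index G m" for H
  proof -
    have sg: "subgroup H G" using H by (simp add: subgroups_of_index_def)
    have "e H (inv_into (rcosets H) (e H) i #> s) \<in> {0..<m}" if "i \<in> {0..<m}" "s \<in> S" for i s
      using e[OF H] that S rcos_in_rcosets[OF sg] by (metis bij_betwE bij_betw_inv_into subsetD)
    then show ?thesis
      using e[OF H] H_in[OF H] by (auto simp: table_def bij_betw_def restrict_PiE_iff)
  qed
  then have "table ` subgroups_of_index G m \<subseteq> {0..<m} \<times> (({0..<m} \<times> S) \<rightarrow>\<^sub>E {0..<m})"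
    by blast
  moreover have "finite ({0..<m} \<times> (({0..<m} \<times> S) \<rightarrow>\<^sub>E {0..<m}))"
    using assms(2) by (intro finite_cartesian_product finite_PiE) auto
  ultimately show ?thesis by (rule inj_on_finite)
qed

lemma (in group_hom) subgroup_vimage:
  assumes "subgroup Q H"
  shows "subgroup (h -` Q \<inter> carrier G) G"
proof (rule G.subgroupI)
  show "h -` Q \<inter> carrier G \<noteq> {}" using subgroup.one_closed[OF assms] G.one_closed by force
  fix a b assume a: "a \<in> h -` Q \<inter> carrier G"
  then show "inv a \<in> h -` Q \<inter> carrier G" using subgroup.m_inv_closed[OF assms] by auto
  assume "b \<in> h -` Q \<inter> carrier G"
  then show "a \<otimes> b \<in> h -` Q \<inter> carrier G" using a subgroup.m_closed[OF assms] by auto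
qed auto

lemma (in group_hom) image_rcos_vimage:
  assumes surj: "h ` carrier G = carrier H" and Q: "subgroup Q H" and a: "a \<in> carrier G"
  shows "h ` ((h -` Q \<inter> carrier G) #> a) = Q #>\<^bsub>H\<^esub> h a"
proof
  show "h ` ((h -` Q \<inter> carrier G) #> a) \<subseteq> Q #>\<^bsub>H\<^esub> h a"
    using a by (auto simp: r_coset_def)
  show "Q #>\<^bsub>H\<^esub> h a \<subseteq> h ` ((h -` Q \<inter> carrier G) #> a)"
  proof
    fix y assume "y \<in> Q #>\<^bsub>H\<^esub> h a"
    then obtain q where q: "q \<in> Q" "y = q \<otimes>\<^bsub>H\<^esub> h a" by (auto simp: r_coset_def)
    then obtain x where x: "x \<in> carrier G" "h x = q"
      using surj subgroup.subset[OF Q] by (metis image_iff subsetD)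
    then have "x \<otimes> a \<in> (h -` Q \<inter> carrier G) #> a" "h (x \<otimes> a) = y"
      using q a by (auto simp: r_coset_def)
    then show "y \<in> h ` ((h -` Q \<inter> carrier G) #> a)" by blast
  qed
qed

lemma (in group_hom) bij_betw_rcosets_vimage:
  assumes surj: "h ` carrier G = carrier H" and Q: "subgroup Q H"
  shows "bij_betw (image h) (rcosets\<^bsub>G\<^esub> (h -` Q \<inter> carrier G)) (rcosets\<^bsub>H\<^esub> Q)"
proof (rule bij_betwI')
  let ?P = "h -` Q \<inter> carrier G"
  note img = image_rcos_vimage[OF surj Q]
  fix C D assume "C \<in> rcosets\<^bsub>G\<^esub> ?P" "D \<in> rcosets\<^bsub>G\<^esub> ?P"
  then obtain a b where ab: "a \<in> carrier G" "C = ?P #> a" "b \<in> carrier G" "D = ?P #> b"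
    by (metis G.rcosetsE)
  have "h ` C = h ` D \<longleftrightarrow> Q #>\<^bsub>H\<^esub> h a = Q #>\<^bsub>H\<^esub> h b" using ab img by simp
  also have "\<dots> \<longleftrightarrow> h (a \<otimes> inv b) \<in> Q" using H.rcos_eq_iff[OF Q] ab by simp
  also have "\<dots> \<longleftrightarrow> C = D" using G.rcos_eq_iff[OF subgroup_vimage[OF Q]] ab by simp
  finally show "h ` C = h ` D \<longleftrightarrow> C = D" .
next
  fix C assume "C \<in> rcosets\<^bsub>G\<^esub> (h -` Q \<inter> carrier G)"
  then obtain a where "a \<in> carrier G" "C = (h -` Q \<inter> carrier G) #> a" by (rule G.rcosetsE)
  then show "h ` C \<in> rcosets\<^bsub>H\<^esub> Q"
    using image_rcos_vimage[OF surj Q] H.rcosetsI[OF subgroup.subset[OF Q]] by simp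
next
  fix D assume "D \<in> rcosets\<^bsub>H\<^esub> Q"
  then obtain y where y: "y \<in> carrier H" "D = Q #>\<^bsub>H\<^esub> y" by (rule H.rcosetsE)
  moreover have "y \<in> h ` carrier G" using surj y(1) by simp
  then obtain a where a: "a \<in> carrier G" "h a = y" by blast
  ultimately have "D = h ` ((h -` Q \<inter> carrier G) #> a)" using image_rcos_vimage[OF surj Q] by simp
  then show "\<exists>C\<in>rcosets\<^bsub>G\<^esub> (h -` Q \<inter> carrier G). D = h ` C"
    using G.rcosetsI[of "h -` Q \<inter> carrier G" a] a(1) by blast
qed

lemma (in group_hom) card_subgroups_of_index_le:
  assumes surj: "h ` carrier G = carrier H" and fin: "finite (subgroups_of_index G n)"
  shows "card (subgroups_of_index H n) \<le> card (subgroups_of_index G n)"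
proof (rule card_inj_on_le[OF _ _ fin])
  show "inj_on (\<lambda>Q. h -` Q \<inter> carrier G) (subgroups_of_index H n)"
  proof (rule inj_onI)
    fix Q Q' assume "Q \<in> subgroups_of_index H n" "Q' \<in> subgroups_of_index H n"
      and eq: "h -` Q \<inter> carrier G = h -` Q' \<inter> carrier G"
    then have "Q \<subseteq> h ` carrier G" "Q' \<subseteq> h ` carrier G"
      using surj by (simp_all add: subgroups_of_index_def subgroup.subset)
    then have "Q = h ` (h -` Q \<inter> carrier G)" "Q' = h ` (h -` Q' \<inter> carrier G)"
      by auto
    then show "Q = Q'" using eq by simp
  qed
  show "(\<lambda>Q. h -` Q \<inter> carrier G) ` subgroups_of_index H n \<subseteq> subgroups_of_index G n"
  proof clarify
    fix Q assume "Q \<in> subgroups_of_index H n"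
    then have "subgroup Q H" "finite (rcosets\<^bsub>H\<^esub> Q)" "card (rcosets\<^bsub>H\<^esub> Q) = n"
      by (simp_all add: subgroups_of_index_def)
    then show "h -` Q \<inter> carrier G \<in> subgroups_of_index G n"
      using bij_betw_finite[OF bij_betw_rcosets_vimage[OF surj]]
        bij_betw_same_card[OF bij_betw_rcosets_vimage[OF surj]] subgroup_vimage
      by (simp add: subgroups_of_index_def)
  qed
qed

section \<open>Schreier generators\<close>

text \<open>Choosing \<open>\<one>\<close> as the representative of \<open>Q\<close> itself makes the Schreier residue of an
  element of \<open>Q\<close> the element itself.\<close>

definition coset_rep :: "('g, 'm) monoid_scheme \<Rightarrow> 'g set \<Rightarrow> 'g set \<Rightarrow> 'g" where
  "coset_rep K Q C = (if C = Q then \<one>\<^bsub>K\<^esub> else (SOME x. x \<in> C))"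

definition schreier_residue :: "('g, 'm) monoid_scheme \<Rightarrow> 'g set \<Rightarrow> 'g \<Rightarrow> 'g" where
  "schreier_residue K Q c = c \<otimes>\<^bsub>K\<^esub> inv\<^bsub>K\<^esub> coset_rep K Q (Q #>\<^bsub>K\<^esub> c)"

definition schreier_gen :: "('g, 'm) monoid_scheme \<Rightarrow> 'g set \<Rightarrow> 'g set \<Rightarrow> 'g \<Rightarrow> 'g" where
  "schreier_gen K Q C s = schreier_residue K Q (coset_rep K Q C \<otimes>\<^bsub>K\<^esub> s)"

lemma (in group) coset_rep:
  assumes Q: "subgroup Q G" and C: "C \<in> rcosets Q"
  shows "coset_rep G Q C \<in> carrier G" "C = Q #> coset_rep G Q C"
proof -
  obtain a where a: "a \<in> carrier G" "C = Q #> a" using C by (rule rcosetsE)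
  have "coset_rep G Q C \<in> Q #> a"
  proof (cases "C = Q")
    case True
    then show ?thesis using Q a by (simp add: coset_rep_def rcos_self subgroup.one_closed)
  next
    case False
    have "a \<in> C" using rcos_self[OF a(1) Q] a(2) by simp
    then show ?thesis using False a(2) by (auto simp: coset_rep_def some_in_eq)
  qed
  then show "coset_rep G Q C \<in> carrier G" "C = Q #> coset_rep G Q C"
    using subgroup.elemrcos_carrier[OF Q is_group a(1)] repr_independence[OF _ a(1) Q] a(2)
    by simp_all
qed

lemma (in group) schreier_residue_mem:
  assumes Q: "subgroup Q G" and c: "c \<in> carrier G"
  shows "schreier_residue G Q c \<in> Q"
proof -
  define t where "t = coset_rep G Q (Q #> c)"
  note t = coset_rep[OF Q rcosetsI[OF subgroup.subset[OF Q] c], folded t_def]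
  then show ?thesis
    unfolding schreier_residue_def t_def[symmetric] using rcos_eq_iff[OF Q c] by simp
qed

lemma (in group) schreier_residue_of_mem:
  assumes Q: "subgroup Q G" and b: "b \<in> Q"
  shows "schreier_residue G Q b = b"
  using coset_join2[OF subgroup.mem_carrier[OF Q b] Q b] subgroup.mem_carrier[OF Q b]
  by (simp add: schreier_residue_def coset_rep_def)

lemma (in group) schreier_residue_mult:
  assumes Q: "subgroup Q G" and c: "c \<in> carrier G" and s: "s \<in> carrier G"
  shows "schreier_residue G Q (c \<otimes> s) = schreier_residue G Q c \<otimes> schreier_gen G Q (Q #> c) s"
proof -
  define t where "t = coset_rep G Q (Q #> c)"
  define t' where "t' = coset_rep G Q (Q #> (c \<otimes> s))"
  note t = coset_rep[OF Q rcosetsI[OF subgroup.subset[OF Q] c], folded t_def]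
  have t': "t' \<in> carrier G"
    using coset_rep(1)[OF Q rcosetsI[OF subgroup.subset[OF Q] m_closed[OF c s]]] by (simp add: t'_def)
  have "Q #> (t \<otimes> s) = (Q #> t) #> s" using coset_mult_assoc[OF subgroup.subset[OF Q] t(1) s] by simp
  also have "\<dots> = Q #> (c \<otimes> s)" using coset_mult_assoc[OF subgroup.subset[OF Q] c s] t(2) by simp
  finally have "schreier_gen G Q (Q #> c) s = t \<otimes> s \<otimes> inv t'"
    by (simp add: schreier_gen_def schreier_residue_def t_def t'_def)
  then show ?thesis
    using c s t(1) t' by (simp add: schreier_residue_def m_assoc inv_mult_cancel_left flip: t_def t'_def)
qed

lemma (in group) schreier_gen_mem:
  assumes Q: "subgroup Q G" and C: "C \<in> rcosets Q" and s: "s \<in> carrier G"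
  shows "schreier_gen G Q C s \<in> Q"
  unfolding schreier_gen_def using schreier_residue_mem[OF Q] coset_rep(1)[OF Q C] s by simp

text \<open>Schreier's lemma, as an induction principle: the Schreier generators of a subgroup generate
  it as a monoid, since the residue of \<open>c \<otimes> s\<close> is the residue of \<open>c\<close> times a Schreier generator.\<close>

lemma (in group) schreier_induct:
  assumes gen: "monoid_generated_by G S" and Q: "subgroup Q G" and b: "b \<in> Q"
    and one: "P \<one>"
    and mult: "\<And>x y. x \<in> Q \<Longrightarrow> y \<in> Q \<Longrightarrow> P x \<Longrightarrow> P y \<Longrightarrow> P (x \<otimes> y)"
    and gens: "\<And>C s. C \<in> rcosets Q \<Longrightarrow> s \<in> S \<Longrightarrow> P (schreier_gen G Q C s)"
  shows "P b"
proof -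
  have S: "S \<subseteq> carrier G" using gen by (simp add: monoid_generated_by_def)
  have residue_prod: "P (schreier_residue G Q (c \<otimes> word_prod G w))"
    if "c \<in> carrier G" "P (schreier_residue G Q c)" "set w \<subseteq> S" for c w
    using that
  proof (induction w arbitrary: c)
    case Nil
    then show ?case by simp
  next
    case (Cons s w)
    have s: "s \<in> carrier G" "s \<in> S" and w: "word_prod G w \<in> carrier G"
      using Cons.prems S by (auto intro: word_prod_closed)
    have C: "Q #> c \<in> rcosets Q" using rcosetsI[OF subgroup.subset[OF Q] Cons.prems(1)] .
    have "P (schreier_residue G Q (c \<otimes> s))"
      using schreier_residue_mult[OF Q Cons.prems(1) s(1)] mult schreier_residue_mem[OF Q Cons.prems(1)]
        schreier_gen_mem[OF Q C s(1)] Cons.prems(2) gens[OF C s(2)] by simp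
    then show ?case
      using Cons.IH[of "c \<otimes> s"] Cons.prems s w by (simp add: m_assoc)
  qed
  obtain w where w: "set w \<subseteq> S" "b = word_prod G w"
    using gen subgroup.mem_carrier[OF Q b] unfolding monoid_generated_by_def by blast
  have "P (schreier_residue G Q \<one>)"
    using one schreier_residue_of_mem[OF Q subgroup.one_closed[OF Q]] by simp
  then have "P (schreier_residue G Q (\<one> \<otimes> word_prod G w))"
    using residue_prod[OF one_closed _ w(1)] by simp
  then show ?thesis
    using schreier_residue_of_mem[OF Q b] w(2) word_prod_closed[OF order_trans[OF w(1) S]] by simp
qed

section \<open>Subgroups of an internal direct product\<close>

locale direct_decomposition = G: group G + K1: group K1 + K2: group K2
  for G :: "('g, 'x) monoid_scheme" (structure) and K1 :: "('a, 'y) monoid_scheme"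
    and K2 :: "('b, 'z) monoid_scheme" +
  fixes i1 :: "'a \<Rightarrow> 'g" and i2 :: "'b \<Rightarrow> 'g" and p1 :: "'g \<Rightarrow> 'a" and p2 :: "'g \<Rightarrow> 'b"
  assumes i1_hom: "i1 \<in> hom K1 G" and i2_hom: "i2 \<in> hom K2 G"
    and p1_hom: "p1 \<in> hom G K1" and p2_hom: "p2 \<in> hom G K2"
    and p1_i1: "x \<in> carrier K1 \<Longrightarrow> p1 (i1 x) = x"
    and p2_i2: "y \<in> carrier K2 \<Longrightarrow> p2 (i2 y) = y"
    and p1_i2: "y \<in> carrier K2 \<Longrightarrow> p1 (i2 y) = \<one>\<^bsub>K1\<^esub>"
    and p2_i1: "x \<in> carrier K1 \<Longrightarrow> p2 (i1 x) = \<one>\<^bsub>K2\<^esub>"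
    and decompose: "g \<in> carrier G \<Longrightarrow> g = i1 (p1 g) \<otimes> i2 (p2 g)"
    and i1_i2_commute: "x \<in> carrier K1 \<Longrightarrow> y \<in> carrier K2 \<Longrightarrow> i1 x \<otimes> i2 y = i2 y \<otimes> i1 x"

sublocale direct_decomposition \<subseteq> i1: group_hom K1 G i1
  using i1_hom by unfold_locales
sublocale direct_decomposition \<subseteq> i2: group_hom K2 G i2
  using i2_hom by unfold_locales
sublocale direct_decomposition \<subseteq> p1: group_hom G K1 p1
  using p1_hom by unfold_locales
sublocale direct_decomposition \<subseteq> p2: group_hom G K2 p2
  using p2_hom by unfold_locales

context direct_decomposition
begin

lemma p1_surj: "p1 ` carrier G = carrier K1"
proof
  show "carrier K1 \<subseteq> p1 ` carrier G"
    using p1_i1 i1.hom_closed by (metis image_eqI subsetI)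
qed auto

lemma p2_surj: "p2 ` carrier G = carrier K2"
proof
  show "carrier K2 \<subseteq> p2 ` carrier G"
    using p2_i2 i2.hom_closed by (metis image_eqI subsetI)
qed auto

definition fiber :: "'g set \<Rightarrow> 'b \<Rightarrow> 'a set" where
  "fiber H b = {x \<in> carrier K1. i1 x \<otimes> i2 b \<in> H}"

lemma fiber_one: "fiber H \<one>\<^bsub>K2\<^esub> = i1 -` H \<inter> carrier K1"
  by (auto simp: fiber_def)

lemma fiber_one_subgroup: "subgroup H G \<Longrightarrow> subgroup (fiber H \<one>\<^bsub>K2\<^esub>) K1"
  unfolding fiber_one by (rule i1.subgroup_vimage)

lemma mem_iff_fiber: "g \<in> carrier G \<Longrightarrow> g \<in> H \<longleftrightarrow> p1 g \<in> fiber H (p2 g)"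
  using decompose by (auto simp: fiber_def)

lemma fiber_ne:
  assumes "b \<in> p2 ` H" "subgroup H G"
  shows "fiber H b \<noteq> {}"
proof -
  obtain g where "g \<in> H" "b = p2 g" using assms(1) by blast
  then have "p1 g \<in> fiber H b" using mem_iff_fiber subgroup.mem_carrier[OF assms(2)] by blast
  then show ?thesis by blast
qed

lemma fiber_mult:
  assumes H: "subgroup H G" and x: "x \<in> fiber H b" and x': "x' \<in> fiber H b'"
    and b: "b \<in> carrier K2" "b' \<in> carrier K2"
  shows "x \<otimes>\<^bsub>K1\<^esub> x' \<in> fiber H (b \<otimes>\<^bsub>K2\<^esub> b')"
proof -
  have xc: "x \<in> carrier K1" "x' \<in> carrier K1" using x x' by (auto simp: fiber_def)
  have "i1 (x \<otimes>\<^bsub>K1\<^esub> x') \<otimes> i2 (b \<otimes>\<^bsub>K2\<^esub> b') = i1 x \<otimes> (i1 x' \<otimes> i2 b) \<otimes> i2 b'"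
    using xc b by (simp add: G.m_assoc)
  also have "\<dots> = i1 x \<otimes> (i2 b \<otimes> i1 x') \<otimes> i2 b'"
    using i1_i2_commute[OF xc(2) b(1)] by simp
  also have "\<dots> = (i1 x \<otimes> i2 b) \<otimes> (i1 x' \<otimes> i2 b')"
    using xc b by (simp add: G.m_assoc)
  also have "\<dots> \<in> H" using H x x' by (auto simp: fiber_def intro: subgroup.m_closed)
  finally show ?thesis using xc by (simp add: fiber_def)
qed

lemma fiber_eq_rcos:
  assumes H: "subgroup H G" and z: "z \<in> fiber H c" and c: "c \<in> carrier K2"
  shows "fiber H c = fiber H \<one>\<^bsub>K2\<^esub> #>\<^bsub>K1\<^esub> z"
proof -
  have zc: "z \<in> carrier K1" "i1 z \<otimes> i2 c \<in> H" using z by (auto simp: fiber_def)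
  have "y \<in> fiber H c \<longleftrightarrow> y \<in> fiber H \<one>\<^bsub>K2\<^esub> #>\<^bsub>K1\<^esub> z" if y: "y \<in> carrier K1" for y
  proof -
    define g where "g = (i1 y \<otimes> i2 c) \<otimes> inv (i1 z \<otimes> i2 c)"
    have g: "g \<in> carrier G" "p1 g = y \<otimes>\<^bsub>K1\<^esub> inv\<^bsub>K1\<^esub> z" "p2 g = \<one>\<^bsub>K2\<^esub>"
      using y zc(1) c by (simp_all add: g_def p1_i1 p1_i2 p2_i1 p2_i2)
    have "y \<in> fiber H c \<longleftrightarrow> g \<in> H"
      using G.mult_inv_mem_iff[OF H zc(2)] y c by (simp add: g_def fiber_def)
    also have "\<dots> \<longleftrightarrow> y \<otimes>\<^bsub>K1\<^esub> inv\<^bsub>K1\<^esub> z \<in> fiber H \<one>\<^bsub>K2\<^esub>"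
      using mem_iff_fiber[OF g(1)] g by simp
    also have "\<dots> \<longleftrightarrow> y \<in> fiber H \<one>\<^bsub>K2\<^esub> #>\<^bsub>K1\<^esub> z"
      using subgroup.rcos_module[OF fiber_one_subgroup[OF H] K1.is_group zc(1) y] by simp
    finally show ?thesis .
  qed
  moreover have "fiber H \<one>\<^bsub>K2\<^esub> #>\<^bsub>K1\<^esub> z \<subseteq> carrier K1"
    using K1.r_coset_subset_G[OF subgroup.subset[OF fiber_one_subgroup[OF H]] zc(1)] .
  ultimately show ?thesis by (auto simp: fiber_def)
qed

lemma fiber_in_rcosets:
  assumes H: "subgroup H G" and b: "b \<in> p2 ` H"
  shows "fiber H b \<in> rcosets\<^bsub>K1\<^esub> (fiber H \<one>\<^bsub>K2\<^esub>)"
proof -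
  obtain z where z: "z \<in> fiber H b" using fiber_ne[OF b H] by blast
  have "b \<in> carrier K2" using b subgroup.mem_carrier[OF H] by auto
  moreover have "z \<in> carrier K1" using z by (simp add: fiber_def)
  ultimately show ?thesis
    using fiber_eq_rcos[OF H z] K1.rcosetsI[OF subgroup.subset[OF fiber_one_subgroup[OF H]]] by simp
qed

text \<open>Fibers are cosets of the fiber over the identity, so a single common element decides
  their equality.\<close>

lemma fiber_mult_eq:
  assumes H: "subgroup H G" and H': "subgroup H' G"
    and one: "fiber H \<one>\<^bsub>K2\<^esub> = fiber H' \<one>\<^bsub>K2\<^esub>"
    and b: "b \<in> p2 ` H" "b' \<in> p2 ` H"
    and eq: "fiber H b = fiber H' b" "fiber H b' = fiber H' b'"
  shows "fiber H (b \<otimes>\<^bsub>K2\<^esub> b') = fiber H' (b \<otimes>\<^bsub>K2\<^esub> b')"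
proof -
  have bc: "b \<in> carrier K2" "b' \<in> carrier K2" using b subgroup.mem_carrier[OF H] by auto
  obtain x x' where x: "x \<in> fiber H b" "x' \<in> fiber H b'" using fiber_ne[OF _ H] b by blast
  have u: "x \<otimes>\<^bsub>K1\<^esub> x' \<in> fiber H (b \<otimes>\<^bsub>K2\<^esub> b')" "x \<otimes>\<^bsub>K1\<^esub> x' \<in> fiber H' (b \<otimes>\<^bsub>K2\<^esub> b')"
    using fiber_mult[OF H x bc] fiber_mult[OF H' _ _ bc] x eq by auto
  show ?thesis
    using fiber_eq_rcos[OF H u(1) K2.m_closed[OF bc]] fiber_eq_rcos[OF H' u(2) K2.m_closed[OF bc]] one
    by simp
qed


lemma rcos_eq_imp_factor_rcos_eq:
  assumes H: "subgroup H G" and x: "x \<in> carrier K1" "x' \<in> carrier K1"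
    and y: "y \<in> carrier K2" "y' \<in> carrier K2"
    and eq: "H #> (i1 x \<otimes> i2 y) = H #> (i1 x' \<otimes> i2 y')"
  shows "p2 ` H #>\<^bsub>K2\<^esub> y = p2 ` H #>\<^bsub>K2\<^esub> y'"
    and "y = y' \<Longrightarrow> fiber H \<one>\<^bsub>K2\<^esub> #>\<^bsub>K1\<^esub> x = fiber H \<one>\<^bsub>K2\<^esub> #>\<^bsub>K1\<^esub> x'"
proof -
  define g where "g = (i1 x \<otimes> i2 y) \<otimes> inv (i1 x' \<otimes> i2 y')"
  have g: "g \<in> carrier G" "p1 g = x \<otimes>\<^bsub>K1\<^esub> inv\<^bsub>K1\<^esub> x'" "p2 g = y \<otimes>\<^bsub>K2\<^esub> inv\<^bsub>K2\<^esub> y'"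
    using x y by (simp_all add: g_def p1_i1 p1_i2 p2_i1 p2_i2)
  have gH: "g \<in> H" using G.rcos_eq_iff[OF H] eq x y by (simp add: g_def)
  then have "y \<otimes>\<^bsub>K2\<^esub> inv\<^bsub>K2\<^esub> y' \<in> p2 ` H" using g(3) by (metis image_eqI)
  then show "p2 ` H #>\<^bsub>K2\<^esub> y = p2 ` H #>\<^bsub>K2\<^esub> y'"
    using K2.rcos_eq_iff[OF p2.subgroup_img_is_subgroup[OF H] y] by simp
  assume "y = y'"
  then have "x \<otimes>\<^bsub>K1\<^esub> inv\<^bsub>K1\<^esub> x' \<in> fiber H \<one>\<^bsub>K2\<^esub>"
    using gH mem_iff_fiber[OF g(1)] g(2,3) y by simp
  then show "fiber H \<one>\<^bsub>K2\<^esub> #>\<^bsub>K1\<^esub> x = fiber H \<one>\<^bsub>K2\<^esub> #>\<^bsub>K1\<^esub> x'"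
    using K1.rcos_eq_iff[OF fiber_one_subgroup[OF H] x] by simp
qed

text \<open>\<open>(C1, C2) \<mapsto> H #> (i1 x \<otimes> i2 y)\<close>, for representatives \<open>x \<in> C1\<close> and \<open>y \<in> C2\<close>, is injective.\<close>

lemma index_mult_le:
  assumes H: "subgroup H G" and fin: "finite (rcosets H)"
  shows "finite (rcosets\<^bsub>K1\<^esub> (fiber H \<one>\<^bsub>K2\<^esub>))" "finite (rcosets\<^bsub>K2\<^esub> (p2 ` H))"
    "card (rcosets\<^bsub>K1\<^esub> (fiber H \<one>\<^bsub>K2\<^esub>)) * card (rcosets\<^bsub>K2\<^esub> (p2 ` H)) \<le> card (rcosets H)"
proof -
  define L where "L = fiber H \<one>\<^bsub>K2\<^esub>"
  define Q where "Q = p2 ` H"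
  have L: "subgroup L K1" using fiber_one_subgroup[OF H] by (simp add: L_def)
  have Q: "subgroup Q K2" using p2.subgroup_img_is_subgroup[OF H] by (simp add: Q_def)
  define f where "f = (\<lambda>(C1, C2). H #> (i1 (coset_rep K1 L C1) \<otimes> i2 (coset_rep K2 Q C2)))"
  have "inj_on f ((rcosets\<^bsub>K1\<^esub> L) \<times> (rcosets\<^bsub>K2\<^esub> Q))"
  proof (rule inj_onI, clarify)
    fix C1 C2 C1' C2'
    assume C: "C1 \<in> rcosets\<^bsub>K1\<^esub> L" "C2 \<in> rcosets\<^bsub>K2\<^esub> Q" "C1' \<in> rcosets\<^bsub>K1\<^esub> L" "C2' \<in> rcosets\<^bsub>K2\<^esub> Q"
      and eq: "f (C1, C2) = f (C1', C2')"
    note rx = K1.coset_rep[OF L C(1)] and rx' = K1.coset_rep[OF L C(3)]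
    note ry = K2.coset_rep[OF Q C(2)] and ry' = K2.coset_rep[OF Q C(4)]
    note factors = rcos_eq_imp_factor_rcos_eq[OF H rx(1) rx'(1) ry(1) ry'(1), folded L_def Q_def]
    have "C2 = C2'" using factors(1) eq ry(2) ry'(2) by (simp add: f_def)
    moreover have "C1 = C1'" using factors(2) eq rx(2) rx'(2) \<open>C2 = C2'\<close> by (simp add: f_def)
    ultimately show "C1 = C1' \<and> C2 = C2'" by simp
  qed
  moreover have "f ` ((rcosets\<^bsub>K1\<^esub> L) \<times> (rcosets\<^bsub>K2\<^esub> Q)) \<subseteq> rcosets H"
    using K1.coset_rep(1)[OF L] K2.coset_rep(1)[OF Q] G.rcosetsI[OF subgroup.subset[OF H]]
    by (auto simp: f_def)
  ultimately have fin_prod: "finite ((rcosets\<^bsub>K1\<^esub> L) \<times> (rcosets\<^bsub>K2\<^esub> Q))"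
    and card_prod: "card ((rcosets\<^bsub>K1\<^esub> L) \<times> (rcosets\<^bsub>K2\<^esub> Q)) \<le> card (rcosets H)"
    using fin by (auto intro: inj_on_finite card_inj_on_le)
  show "finite (rcosets\<^bsub>K1\<^esub> (fiber H \<one>\<^bsub>K2\<^esub>))" "finite (rcosets\<^bsub>K2\<^esub> (p2 ` H))"
    using fin_prod K1.rcosets_ne[OF L] K2.rcosets_ne[OF Q]
    by (auto simp: L_def Q_def dest: finite_cartesian_productD1 finite_cartesian_productD2)
  show "card (rcosets\<^bsub>K1\<^esub> (fiber H \<one>\<^bsub>K2\<^esub>)) * card (rcosets\<^bsub>K2\<^esub> (p2 ` H)) \<le> card (rcosets H)"
    using card_prod by (simp add: L_def Q_def card_cartesian_product)
qed

definition fiber_code :: "'b set \<Rightarrow> 'g set \<Rightarrow> 'a set \<times> 'b set \<times> ('b set \<times> 'b \<Rightarrow> 'a set)" where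
  "fiber_code S H = (fiber H \<one>\<^bsub>K2\<^esub>, p2 ` H,
     restrict (\<lambda>(C, s). fiber H (schreier_gen K2 (p2 ` H) C s)) ((rcosets\<^bsub>K2\<^esub> (p2 ` H)) \<times> S))"

lemma fiber_code_inj:
  assumes gen: "monoid_generated_by K2 S"
  shows "inj_on (fiber_code S) {H. subgroup H G}"
proof (rule inj_onI)
  fix H H' assume "H \<in> {H. subgroup H G}" "H' \<in> {H. subgroup H G}"
    and eq: "fiber_code S H = fiber_code S H'"
  then have H: "subgroup H G" and H': "subgroup H' G" by simp_all
  define Q where "Q = p2 ` H"
  have one: "fiber H \<one>\<^bsub>K2\<^esub> = fiber H' \<one>\<^bsub>K2\<^esub>" and Q': "p2 ` H' = Q"
    using eq by (simp_all add: fiber_code_def Q_def)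
  have gens: "fiber H (schreier_gen K2 Q C s) = fiber H' (schreier_gen K2 Q C s)"
    if "C \<in> rcosets\<^bsub>K2\<^esub> Q" "s \<in> S" for C s
    using fun_cong[OF arg_cong[where f="\<lambda>c. snd (snd c)", OF eq], of "(C, s)"] that Q'
    by (simp add: fiber_code_def Q_def)
  have Q: "subgroup Q K2" using p2.subgroup_img_is_subgroup[OF H] by (simp add: Q_def)
  have fibers: "fiber H b = fiber H' b" if "b \<in> Q" for b
    using gen Q that
  proof (rule K2.schreier_induct)
    show "fiber H \<one>\<^bsub>K2\<^esub> = fiber H' \<one>\<^bsub>K2\<^esub>" by (fact one)
    show "fiber H (b \<otimes>\<^bsub>K2\<^esub> b') = fiber H' (b \<otimes>\<^bsub>K2\<^esub> b')"
      if "b \<in> Q" "b' \<in> Q" "fiber H b = fiber H' b" "fiber H b' = fiber H' b'" for b b'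
      using fiber_mult_eq[OF H H' one] that by (simp add: Q_def)
  qed (rule gens)
  have "g \<in> H \<longleftrightarrow> g \<in> H'" if g: "g \<in> carrier G" for g
  proof -
    have "g \<in> H \<longleftrightarrow> p2 g \<in> Q \<and> p1 g \<in> fiber H (p2 g)" using mem_iff_fiber[OF g] by (auto simp: Q_def)
    moreover have "g \<in> H' \<longleftrightarrow> p2 g \<in> Q \<and> p1 g \<in> fiber H' (p2 g)"
      using mem_iff_fiber[OF g] Q' by blast
    ultimately show ?thesis using fibers by blast
  qed
  then show "H = H'" using subgroup.subset[OF H] subgroup.subset[OF H'] by blast
qed


definition code_space :: "'b set \<Rightarrow> nat \<Rightarrow> nat \<Rightarrow> ('a set \<times> 'b set \<times> ('b set \<times> 'b \<Rightarrow> 'a set)) set" where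
  "code_space S m a = (SIGMA L:subgroups_of_index K1 m. SIGMA Q:subgroups_of_index K2 a.
     ((rcosets\<^bsub>K2\<^esub> Q) \<times> S) \<rightarrow>\<^sub>E rcosets\<^bsub>K1\<^esub> L)"

lemma finite_card_code_space:
  assumes "finite S" "finite (subgroups_of_index K1 m)" "finite (subgroups_of_index K2 a)"
  shows "finite (code_space S m a)"
    "card (code_space S m a) =
       card (subgroups_of_index K1 m) * card (subgroups_of_index K2 a) * m ^ (a * card S)"
proof -
  have fun_space: "finite (((rcosets\<^bsub>K2\<^esub> Q) \<times> S) \<rightarrow>\<^sub>E rcosets\<^bsub>K1\<^esub> L)"
    "card (((rcosets\<^bsub>K2\<^esub> Q) \<times> S) \<rightarrow>\<^sub>E rcosets\<^bsub>K1\<^esub> L) = m ^ (a * card S)"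
    if "L \<in> subgroups_of_index K1 m" "Q \<in> subgroups_of_index K2 a" for L Q
    using that assms(1) by (auto simp: subgroups_of_index_def card_PiE card_cartesian_product
        intro!: finite_PiE)
  show "finite (code_space S m a)"
    unfolding code_space_def using assms(2,3) fun_space(1) by (intro finite_SigmaI) auto
  have "card (code_space S m a) =
      (\<Sum>L\<in>subgroups_of_index K1 m. \<Sum>Q\<in>subgroups_of_index K2 a. m ^ (a * card S))"
    unfolding code_space_def using assms(2,3) fun_space by simp
  then show "card (code_space S m a) =
      card (subgroups_of_index K1 m) * card (subgroups_of_index K2 a) * m ^ (a * card S)"
    by simp
qed

lemma fiber_code_mem:
  assumes gen: "monoid_generated_by K2 S" and H: "H \<in> subgroups_of_index G n"
  shows "fiber_code S H \<in> (\<Union>m\<in>{1..n}. \<Union>a\<in>{a\<in>{1..n}. m * a \<le> n}. code_space S m a)"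
proof -
  have sH: "subgroup H G" and fin: "finite (rcosets H)" and n: "card (rcosets H) = n"
    using H by (simp_all add: subgroups_of_index_def)
  define L where "L = fiber H \<one>\<^bsub>K2\<^esub>"
  define Q where "Q = p2 ` H"
  define m where "m = card (rcosets\<^bsub>K1\<^esub> L)"
  define a where "a = card (rcosets\<^bsub>K2\<^esub> Q)"
  note idx = index_mult_le[OF sH fin, folded L_def Q_def m_def a_def]
  have L: "subgroup L K1" using fiber_one_subgroup[OF sH] by (simp add: L_def)
  have Q: "subgroup Q K2" using p2.subgroup_img_is_subgroup[OF sH] by (simp add: Q_def)
  have "1 \<le> m" "1 \<le> a"
    using idx(1,2) K1.rcosets_ne[OF L] K2.rcosets_ne[OF Q] by (simp_all add: m_def a_def Suc_le_eq card_gt_0_iff)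
  moreover have "m * a \<le> n" using idx(3) n by (simp add: a_def)
  ultimately have ma: "m \<in> {1..n}" "a \<in> {a\<in>{1..n}. m * a \<le> n}"
    by (auto intro: order_trans[of _ "m * a"])
  have "fiber H (schreier_gen K2 Q C s) \<in> rcosets\<^bsub>K1\<^esub> L" if "C \<in> rcosets\<^bsub>K2\<^esub> Q" "s \<in> S" for C s
    using gen that K2.schreier_gen_mem[OF Q] fiber_in_rcosets[OF sH]
    by (auto simp: monoid_generated_by_def L_def Q_def)
  then have "fiber_code S H \<in> code_space S m a"
    using L Q idx(1,2) by (auto simp: code_space_def fiber_code_def subgroups_of_index_def
        L_def Q_def m_def a_def restrict_PiE_iff)
  then show ?thesis using ma by blast
qed

theorem card_subgroups_of_index_le_sum:
  assumes gen: "monoid_generated_by K2 S" and S: "finite S"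
    and fin1: "\<And>m. finite (subgroups_of_index K1 m)"
    and fin2: "\<And>a. finite (subgroups_of_index K2 a)"
  shows "finite (subgroups_of_index G n)"
    and "card (subgroups_of_index G n) \<le> (\<Sum>m\<in>{1..n}. \<Sum>a\<in>{a\<in>{1..n}. m * a \<le> n}.
           card (subgroups_of_index K1 m) * card (subgroups_of_index K2 a) * m ^ (a * card S))"
proof -
  define T where "T = (\<Union>m\<in>{1..n}. \<Union>a\<in>{a\<in>{1..n}. m * a \<le> n}. code_space S m a)"
  have inj: "inj_on (fiber_code S) (subgroups_of_index G n)"
    using fiber_code_inj[OF gen] by (rule inj_on_subset) (auto simp: subgroups_of_index_def)
  have img: "fiber_code S ` subgroups_of_index G n \<subseteq> T"
    using fiber_code_mem[OF gen] by (auto simp: T_def)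
  have finT: "finite T"
    unfolding T_def using finite_card_code_space(1)[OF S fin1 fin2] by auto
  show "finite (subgroups_of_index G n)" using inj img finT by (rule inj_on_finite)
  have "card (subgroups_of_index G n) \<le> card T" using inj img finT by (rule card_inj_on_le)
  also have "\<dots> \<le> (\<Sum>m\<in>{1..n}. \<Sum>a\<in>{a\<in>{1..n}. m * a \<le> n}. card (code_space S m a))"
    unfolding T_def by (intro order_trans[OF card_UN_le] sum_mono card_UN_le) auto
  also have "\<dots> = (\<Sum>m\<in>{1..n}. \<Sum>a\<in>{a\<in>{1..n}. m * a \<le> n}.
           card (subgroups_of_index K1 m) * card (subgroups_of_index K2 a) * m ^ (a * card S))"
    using finite_card_code_space(2)[OF S fin1 fin2] by simp
  finally show "card (subgroups_of_index G n) \<le> \<dots>" .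
qed

end

section \<open>Right-angled Coxeter groups\<close>

lemma word_eq_append_context:
  assumes "word_eq G xs ys"
  shows "word_eq G (as @ xs @ bs) (as @ ys @ bs)"
  using assms
proof (induction rule: word_eq.induct)
  case (square v xs ys)
  then show ?case using word_eq.square[of v G "as @ xs" "ys @ bs"] by simp
next
  case (commute v w xs ys)
  then show ?case using word_eq.commute[of v G w "as @ xs" "ys @ bs"] by simp
qed (blast intro: word_eq.refl word_eq.sym word_eq.trans)+

lemma word_eq_append:
  assumes "word_eq G xs xs'" "word_eq G ys ys'"
  shows "word_eq G (xs @ ys) (xs' @ ys')"
  using word_eq_append_context[OF assms(1), of "[]" ys] word_eq_append_context[OF assms(2), of xs' "[]"]
  by (auto intro: word_eq.trans)

lemma word_eq_square_letter: "v \<in> verts G \<Longrightarrow> word_eq G [v, v] []"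
  using word_eq.square[of v G "[]" "[]"] by simp

lemma word_eq_commute_letters:
  "v \<in> verts G \<Longrightarrow> w \<in> verts G \<Longrightarrow> adj G v w \<Longrightarrow> word_eq G [v, w] [w, v]"
  using word_eq.commute[of v G w "[]" "[]"] by simp

lemma word_eq_rev_append_self: "set xs \<subseteq> verts G \<Longrightarrow> word_eq G (rev xs @ xs) []"
proof (induction xs)
  case Nil
  then show ?case by (simp add: word_eq.refl)
next
  case (Cons x xs)
  then have "word_eq G (rev xs @ [x, x] @ xs) (rev xs @ xs)" by (intro word_eq.square) auto
  with Cons show ?case by (auto intro: word_eq.trans)
qed

lemma words_append [simp]: "xs @ ys \<in> words G \<longleftrightarrow> xs \<in> words G \<and> ys \<in> words G"
  by (auto simp: words_def)

lemma words_Nil [simp]: "[] \<in> words G"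
  by (simp add: words_def)

definition word_class :: "'a graph \<Rightarrow> 'a list \<Rightarrow> 'a list set" where
  "word_class G xs = word_rel G `` {xs}"

lemma equiv_word_rel: "equiv (words G) (word_rel G)"
  unfolding equiv_def refl_on_def sym_def trans_def word_rel_def
  by (auto intro: word_eq.refl word_eq.sym word_eq.trans)

lemma mem_word_class_iff: "ys \<in> word_class G xs \<longleftrightarrow> xs \<in> words G \<and> ys \<in> words G \<and> word_eq G xs ys"
  by (simp add: word_class_def word_rel_def)

lemma word_class_eq_iff:
  assumes "xs \<in> words G" "ys \<in> words G"
  shows "word_class G xs = word_class G ys \<longleftrightarrow> word_eq G xs ys"
  using eq_equiv_class_iff[OF equiv_word_rel assms] assms by (simp add: word_class_def word_rel_def)

lemma word_class_in_carrier: "xs \<in> words G \<Longrightarrow> word_class G xs \<in> carrier (RACG G)"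
  by (simp add: RACG_def word_class_def quotientI)

lemma carrier_RACGE:
  assumes "X \<in> carrier (RACG G)"
  obtains xs where "xs \<in> words G" "X = word_class G xs"
  using assms by (auto simp: RACG_def word_class_def elim!: quotientE)

lemma one_RACG: "\<one>\<^bsub>RACG G\<^esub> = word_class G []"
  by (simp add: RACG_def word_class_def)

lemma mult_word_class:
  assumes "xs \<in> words G" "ys \<in> words G"
  shows "word_class G xs \<otimes>\<^bsub>RACG G\<^esub> word_class G ys = word_class G (xs @ ys)"
proof -
  have "word_rel G `` {xs' @ ys'} = word_class G (xs @ ys)"
    if "xs' \<in> word_class G xs" "ys' \<in> word_class G ys" for xs' ys'
    using that assms word_class_eq_iff[of "xs' @ ys'" G "xs @ ys"]
    by (auto simp: mem_word_class_iff word_class_def[symmetric] intro: word_eq_append word_eq.sym)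
  moreover have "xs \<in> word_class G xs" "ys \<in> word_class G ys"
    using assms by (auto simp: mem_word_class_iff word_eq.refl)
  ultimately show ?thesis by (auto simp: RACG_def)
qed

lemma group_RACG: "group (RACG G)"
proof (rule groupI)
  fix X Y assume "X \<in> carrier (RACG G)" "Y \<in> carrier (RACG G)"
  then show "X \<otimes>\<^bsub>RACG G\<^esub> Y \<in> carrier (RACG G)"
    by (auto elim!: carrier_RACGE simp: mult_word_class word_class_in_carrier)
next
  show "\<one>\<^bsub>RACG G\<^esub> \<in> carrier (RACG G)" by (simp add: one_RACG word_class_in_carrier)
next
  fix X Y Z assume "X \<in> carrier (RACG G)" "Y \<in> carrier (RACG G)" "Z \<in> carrier (RACG G)"
  then show "X \<otimes>\<^bsub>RACG G\<^esub> Y \<otimes>\<^bsub>RACG G\<^esub> Z = X \<otimes>\<^bsub>RACG G\<^esub> (Y \<otimes>\<^bsub>RACG G\<^esub> Z)"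
    by (auto elim!: carrier_RACGE simp: mult_word_class)
next
  fix X assume "X \<in> carrier (RACG G)"
  then show "\<one>\<^bsub>RACG G\<^esub> \<otimes>\<^bsub>RACG G\<^esub> X = X"
    by (auto elim!: carrier_RACGE simp: mult_word_class one_RACG)
next
  fix X assume "X \<in> carrier (RACG G)"
  then obtain xs where xs: "xs \<in> words G" "X = word_class G xs" by (rule carrier_RACGE)
  have "rev xs \<in> words G" using xs(1) by (simp add: words_def)
  moreover have "word_class G (rev xs) \<otimes>\<^bsub>RACG G\<^esub> X = \<one>\<^bsub>RACG G\<^esub>"
    using xs calculation
    by (simp add: mult_word_class one_RACG word_class_eq_iff word_eq_rev_append_self words_def)
  ultimately show "\<exists>Y\<in>carrier (RACG G). Y \<otimes>\<^bsub>RACG G\<^esub> X = \<one>\<^bsub>RACG G\<^esub>"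
    using word_class_in_carrier by blast
qed

definition vertex_gens :: "'a graph \<Rightarrow> 'a list set set" where
  "vertex_gens G = (\<lambda>v. word_class G [v]) ` verts G"

lemma word_class_eq_word_prod:
  "xs \<in> words G \<Longrightarrow> word_class G xs = word_prod (RACG G) (map (\<lambda>v. word_class G [v]) xs)"
proof (induction xs)
  case Nil
  then show ?case by (simp add: one_RACG)
next
  case (Cons v xs)
  then have "[v] \<in> words G" "xs \<in> words G" by (auto simp: words_def)
  then show ?case using Cons.IH mult_word_class[of "[v]" G xs] by simp
qed

lemma monoid_generated_RACG: "monoid_generated_by (RACG G) (vertex_gens G)"
  unfolding monoid_generated_by_def
proof (intro conjI ballI)
  show "vertex_gens G \<subseteq> carrier (RACG G)"
    by (auto simp: vertex_gens_def words_def intro!: word_class_in_carrier)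
  fix X assume "X \<in> carrier (RACG G)"
  then obtain xs where xs: "xs \<in> words G" "X = word_class G xs" by (rule carrier_RACGE)
  then have "set (map (\<lambda>v. word_class G [v]) xs) \<subseteq> vertex_gens G"
    by (auto simp: vertex_gens_def words_def)
  then show "\<exists>w. set w \<subseteq> vertex_gens G \<and> X = word_prod (RACG G) w"
    using word_class_eq_word_prod[OF xs(1)] xs(2) by blast
qed

lemma finite_subgroups_of_index_RACG:
  "finite (verts G) \<Longrightarrow> finite (subgroups_of_index (RACG G) n)"
  by (rule group.finite_subgroups_of_index[OF group_RACG monoid_generated_RACG])
    (simp add: vertex_gens_def)

definition RACG_map :: "'c graph \<Rightarrow> ('a \<Rightarrow> 'c list) \<Rightarrow> 'a list set \<Rightarrow> 'c list set" where
  "RACG_map G' \<sigma> X = (\<Union>xs\<in>X. word_class G' (concat (map \<sigma> xs)))"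

text \<open>A substitution of words for letters that respects the defining relations induces a
  homomorphism of right-angled Coxeter groups (von Dyck's theorem).\<close>

locale RACG_subst =
  fixes G :: "'a graph" and G' :: "'c graph" and \<sigma> :: "'a \<Rightarrow> 'c list"
  assumes subst_words: "v \<in> verts G \<Longrightarrow> \<sigma> v \<in> words G'"
    and subst_square: "v \<in> verts G \<Longrightarrow> word_eq G' (\<sigma> v @ \<sigma> v) []"
    and subst_commute:
      "v \<in> verts G \<Longrightarrow> w \<in> verts G \<Longrightarrow> adj G v w \<Longrightarrow> word_eq G' (\<sigma> v @ \<sigma> w) (\<sigma> w @ \<sigma> v)"
begin

lemma subst_mem_words: "xs \<in> words G \<Longrightarrow> concat (map \<sigma> xs) \<in> words G'"
proof (induction xs)
  case (Cons v xs)
  then show ?case using subst_words[of v] by (simp add: words_def)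
qed simp

lemma word_eq_subst: "word_eq G xs ys \<Longrightarrow> word_eq G' (concat (map \<sigma> xs)) (concat (map \<sigma> ys))"
proof (induction rule: word_eq.induct)
  case (square v xs ys)
  then show ?case
    using word_eq_append_context[OF subst_square, of v "concat (map \<sigma> xs)" "concat (map \<sigma> ys)"]
    by simp
next
  case (commute v w xs ys)
  then show ?case
    using word_eq_append_context[OF subst_commute, of v w "concat (map \<sigma> xs)" "concat (map \<sigma> ys)"]
    by simp
qed (blast intro: word_eq.refl word_eq.sym word_eq.trans)+

lemma RACG_map_word_class:
  assumes "xs \<in> words G"
  shows "RACG_map G' \<sigma> (word_class G xs) = word_class G' (concat (map \<sigma> xs))"
proof -
  have "word_class G' (concat (map \<sigma> ys)) = word_class G' (concat (map \<sigma> xs))"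
    if "ys \<in> word_class G xs" for ys
    using that assms word_eq_subst
    by (auto simp: mem_word_class_iff word_class_eq_iff subst_mem_words intro: word_eq.sym)
  moreover have "xs \<in> word_class G xs" using assms by (simp add: mem_word_class_iff word_eq.refl)
  ultimately show ?thesis unfolding RACG_map_def by blast
qed

lemma RACG_map_hom: "RACG_map G' \<sigma> \<in> hom (RACG G) (RACG G')"
proof (rule homI)
  fix X assume "X \<in> carrier (RACG G)"
  then show "RACG_map G' \<sigma> X \<in> carrier (RACG G')"
    by (auto elim!: carrier_RACGE simp: RACG_map_word_class word_class_in_carrier subst_mem_words)
next
  fix X Y assume "X \<in> carrier (RACG G)" "Y \<in> carrier (RACG G)"
  then show "RACG_map G' \<sigma> (X \<otimes>\<^bsub>RACG G\<^esub> Y) = RACG_map G' \<sigma> X \<otimes>\<^bsub>RACG G'\<^esub> RACG_map G' \<sigma> Y"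
    by (auto elim!: carrier_RACGE simp: RACG_map_word_class mult_word_class subst_mem_words)
qed

end

lemma verts_join: "verts (graph_join G1 G2) = Inl ` verts G1 \<union> Inr ` verts G2"
  by (simp add: graph_join_def verts_def)

lemma adj_join: "adj (graph_join G1 G2) = join_adj (adj G1) (adj G2)"
  by (simp add: graph_join_def adj_def)

lemma map_Inl_mem_words_join: "xs \<in> words G1 \<Longrightarrow> map Inl xs \<in> words (graph_join G1 G2)"
  by (auto simp: words_def verts_join)

lemma map_Inr_mem_words_join: "ys \<in> words G2 \<Longrightarrow> map Inr ys \<in> words (graph_join G1 G2)"
  by (auto simp: words_def verts_join)

definition left_letter :: "'a + 'b \<Rightarrow> 'a list" where
  "left_letter = case_sum (\<lambda>a. [a]) (\<lambda>_. [])"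

definition right_letter :: "'a + 'b \<Rightarrow> 'b list" where
  "right_letter = case_sum (\<lambda>_. []) (\<lambda>b. [b])"

lemma left_letter_simps [simp]: "left_letter (Inl a) = [a]" "left_letter (Inr b) = []"
  by (simp_all add: left_letter_def)

lemma right_letter_simps [simp]: "right_letter (Inl a) = []" "right_letter (Inr b) = [b]"
  by (simp_all add: right_letter_def)

lemma concat_map_Nil [simp]: "concat (map (\<lambda>_. []) xs) = []"
  by (induction xs) simp_all

lemma RACG_subst_Inl: "RACG_subst G1 (graph_join G1 G2) (\<lambda>a. [Inl a])"
  by unfold_locales
    (auto simp: words_def verts_join adj_join intro: word_eq_square_letter word_eq_commute_letters)

lemma RACG_subst_Inr: "RACG_subst G2 (graph_join G1 G2) (\<lambda>b. [Inr b])"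
  by unfold_locales
    (auto simp: words_def verts_join adj_join intro: word_eq_square_letter word_eq_commute_letters)

lemma RACG_subst_left_letter: "RACG_subst (graph_join G1 G2) G1 left_letter"
  by unfold_locales
    (auto simp: words_def verts_join adj_join
      intro: word_eq.refl word_eq_square_letter word_eq_commute_letters)

lemma RACG_subst_right_letter: "RACG_subst (graph_join G1 G2) G2 right_letter"
  by unfold_locales
    (auto simp: words_def verts_join adj_join
      intro: word_eq.refl word_eq_square_letter word_eq_commute_letters)

lemma word_eq_join_Inr_Inls:
  assumes "b \<in> verts G2" "set u \<subseteq> verts G1"
  shows "word_eq (graph_join G1 G2) (Inr b # map Inl u) (map Inl u @ [Inr b])"
  using assms(2)
proof (induction u)
  case Nil
  then show ?case by (simp add: word_eq.refl)
next
  case (Cons a u)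
  have swap: "word_eq (graph_join G1 G2) [Inr b, Inl a] [Inl a, Inr b]"
    using assms Cons.prems by (intro word_eq_commute_letters) (auto simp: verts_join adj_join)
  have "word_eq (graph_join G1 G2) (Inr b # map Inl (a # u)) (Inl a # Inr b # map Inl u)"
    using word_eq_append_context[OF swap, of "[]" "map Inl u"] by simp
  moreover have "word_eq (graph_join G1 G2) (Inl a # Inr b # map Inl u) (Inl a # map Inl u @ [Inr b])"
    using word_eq_append_context[OF Cons.IH, of "[Inl a]" "[]"] Cons.prems by simp
  ultimately show ?case by (auto intro: word_eq.trans)
qed

lemma word_eq_join_sort:
  assumes "xs \<in> words (graph_join G1 G2)"
  shows "word_eq (graph_join G1 G2) xs
           (map Inl (concat (map left_letter xs)) @ map Inr (concat (map right_letter xs)))"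
  using assms
proof (induction xs)
  case Nil
  then show ?case by (simp add: word_eq.refl)
next
  case (Cons c xs)
  then have IH: "word_eq (graph_join G1 G2) ([c] @ xs @ [])
      ([c] @ (map Inl (concat (map left_letter xs)) @ map Inr (concat (map right_letter xs))) @ [])"
    by (intro word_eq_append_context) (simp add: words_def)
  show ?case
  proof (cases c)
    case (Inl a)
    then show ?thesis using IH by simp
  next
    case (Inr b)
    have b: "b \<in> verts G2" using Cons.prems Inr by (auto simp: words_def verts_join)
    have "xs \<in> words (graph_join G1 G2)" using Cons.prems by (simp add: words_def)
    then have "set (concat (map left_letter xs)) \<subseteq> verts G1"
      using RACG_subst.subst_mem_words[OF RACG_subst_left_letter] by (simp add: words_def)
    from word_eq_append_context[OF word_eq_join_Inr_Inls[OF b this], of "[]"]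
    show ?thesis using IH Inr by (auto intro: word_eq.trans)
  qed
qed

lemma direct_decomposition_RACG_join:
  "direct_decomposition (RACG (graph_join G1 G2)) (RACG G1) (RACG G2)
     (RACG_map (graph_join G1 G2) (\<lambda>a. [Inl a])) (RACG_map (graph_join G1 G2) (\<lambda>b. [Inr b]))
     (RACG_map G1 left_letter) (RACG_map G2 right_letter)"
proof -
  let ?J = "graph_join G1 G2"
  interpret i1: RACG_subst G1 ?J "\<lambda>a. [Inl a]" by (rule RACG_subst_Inl)
  interpret i2: RACG_subst G2 ?J "\<lambda>b. [Inr b]" by (rule RACG_subst_Inr)
  interpret p1: RACG_subst ?J G1 left_letter by (rule RACG_subst_left_letter)
  interpret p2: RACG_subst ?J G2 right_letter by (rule RACG_subst_right_letter)
  note simps = i1.RACG_map_word_class i2.RACG_map_word_class p1.RACG_map_word_class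
    p2.RACG_map_word_class map_Inl_mem_words_join map_Inr_mem_words_join comp_def one_RACG
  show ?thesis
  proof (intro direct_decomposition.intro direct_decomposition_axioms.intro group_RACG
      i1.RACG_map_hom i2.RACG_map_hom p1.RACG_map_hom p2.RACG_map_hom)
    fix X assume "X \<in> carrier (RACG G1)"
    then show "RACG_map G1 left_letter (RACG_map ?J (\<lambda>a. [Inl a]) X) = X"
      and "RACG_map G2 right_letter (RACG_map ?J (\<lambda>a. [Inl a]) X) = \<one>\<^bsub>RACG G2\<^esub>"
      by (auto elim!: carrier_RACGE simp: simps)
  next
    fix Y assume "Y \<in> carrier (RACG G2)"
    then show "RACG_map G2 right_letter (RACG_map ?J (\<lambda>b. [Inr b]) Y) = Y"
      and "RACG_map G1 left_letter (RACG_map ?J (\<lambda>b. [Inr b]) Y) = \<one>\<^bsub>RACG G1\<^esub>"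
      by (auto elim!: carrier_RACGE simp: simps)
  next
    fix X assume "X \<in> carrier (RACG ?J)"
    then obtain xs where xs: "xs \<in> words ?J" "X = word_class ?J xs" by (rule carrier_RACGE)
    define u where "u = concat (map left_letter xs)"
    define v where "v = concat (map right_letter xs)"
    have uv: "u \<in> words G1" "v \<in> words G2"
      using p1.subst_mem_words[OF xs(1)] p2.subst_mem_words[OF xs(1)] by (simp_all add: u_def v_def)
    have "word_class ?J xs = word_class ?J (map Inl u @ map Inr v)"
      using word_eq_join_sort[OF xs(1)] xs(1) uv
      by (simp add: word_class_eq_iff map_Inl_mem_words_join map_Inr_mem_words_join u_def v_def)
    then show "X = RACG_map ?J (\<lambda>a. [Inl a]) (RACG_map G1 left_letter X) \<otimes>\<^bsub>RACG ?J\<^esub>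
        RACG_map ?J (\<lambda>b. [Inr b]) (RACG_map G2 right_letter X)"
      using xs uv by (simp add: simps mult_word_class flip: u_def v_def)
  next
    fix X Y assume "X \<in> carrier (RACG G1)" "Y \<in> carrier (RACG G2)"
    then obtain xs ys where xs: "xs \<in> words G1" "X = word_class G1 xs"
      and ys: "ys \<in> words G2" "Y = word_class G2 ys"
      by (metis carrier_RACGE)
    have "word_eq ?J (map Inr ys @ map Inl xs) (map Inl xs @ map Inr ys)"
      using word_eq_join_sort[of "map Inr ys @ map Inl xs"] xs ys
      by (simp add: map_Inl_mem_words_join map_Inr_mem_words_join comp_def)
    then show "RACG_map ?J (\<lambda>a. [Inl a]) X \<otimes>\<^bsub>RACG ?J\<^esub> RACG_map ?J (\<lambda>b. [Inr b]) Y =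
        RACG_map ?J (\<lambda>b. [Inr b]) Y \<otimes>\<^bsub>RACG ?J\<^esub> RACG_map ?J (\<lambda>a. [Inl a]) X"
      using xs ys
      by (simp add: simps mult_word_class word_class_eq_iff word_eq.sym)
  qed
qed

theorem num_subgroups_index_RACG_join_bounds:
  assumes "finite (verts G1)" "finite (verts G2)"
  shows "num_subgroups_index (RACG G1) n \<le> num_subgroups_index (RACG (graph_join G1 G2)) n"
    and "num_subgroups_index (RACG G2) n \<le> num_subgroups_index (RACG (graph_join G1 G2)) n"
    and "num_subgroups_index (RACG (graph_join G1 G2)) n \<le> (\<Sum>m\<in>{1..n}. \<Sum>a\<in>{a\<in>{1..n}. m * a \<le> n}.
           num_subgroups_index (RACG G1) m * num_subgroups_index (RACG G2) a *
           m ^ (a * card (vertex_gens G2)))"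
proof -
  interpret direct_decomposition "RACG (graph_join G1 G2)" "RACG G1" "RACG G2"
    "RACG_map (graph_join G1 G2) (\<lambda>a. [Inl a])" "RACG_map (graph_join G1 G2) (\<lambda>b. [Inr b])"
    "RACG_map G1 left_letter" "RACG_map G2 right_letter"
    by (rule direct_decomposition_RACG_join)
  note count = card_subgroups_of_index_le_sum[OF monoid_generated_RACG _
      finite_subgroups_of_index_RACG[OF assms(1)] finite_subgroups_of_index_RACG[OF assms(2)]]
  have gens: "finite (vertex_gens G2)" using assms(2) by (simp add: vertex_gens_def)
  show "num_subgroups_index (RACG G1) n \<le> num_subgroups_index (RACG (graph_join G1 G2)) n"
    using p1.card_subgroups_of_index_le[OF p1_surj count(1)[OF gens]]
    by (simp add: num_subgroups_index_eq_card)
  show "num_subgroups_index (RACG G2) n \<le> num_subgroups_index (RACG (graph_join G1 G2)) n"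
    using p2.card_subgroups_of_index_le[OF p2_surj count(1)[OF gens]]
    by (simp add: num_subgroups_index_eq_card)
  show "num_subgroups_index (RACG (graph_join G1 G2)) n \<le> (\<Sum>m\<in>{1..n}. \<Sum>a\<in>{a\<in>{1..n}. m * a \<le> n}.
           num_subgroups_index (RACG G1) m * num_subgroups_index (RACG G2) a *
           m ^ (a * card (vertex_gens G2)))"
    using count(2)[OF gens] by (simp add: num_subgroups_index_eq_card)
qed

section \<open>Growth rates\<close>

lemma exp_bound_of_tendsto:
  fixes s :: "nat \<Rightarrow> nat" and \<beta> B :: real
  assumes lim: "(\<lambda>n. ln (real (s n)) / (real n * ln (real n))) \<longlonglongrightarrow> \<beta>"
    and "\<beta> < B" and "0 < B"
  shows "\<exists>C\<ge>1. \<forall>m. real (s m) \<le> C * exp (B * (real m * ln (real m)))"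
proof -
  obtain M where M: "\<And>n. n \<ge> M \<Longrightarrow> ln (real (s n)) / (real n * ln (real n)) < B"
    using order_tendstoD(2)[OF lim \<open>\<beta> < B\<close>] by (auto simp: eventually_sequentially)
  define C where "C = 1 + (\<Sum>m<max M 2. real (s m))"
  have C: "1 \<le> C" by (simp add: C_def sum_nonneg)
  have "real (s m) \<le> C * exp (B * (real m * ln (real m)))" for m
  proof (cases "m < max M 2")
    case True
    have "0 \<le> B * (real m * ln (real m))" using \<open>0 < B\<close> by (cases "m = 0") auto
    then have "C \<le> C * exp (B * (real m * ln (real m)))" using C by simp
    moreover have "real (s m) \<le> C"
      using True member_le_sum[of m "{..<max M 2}" "\<lambda>m. real (s m)"] by (simp add: C_def)
    ultimately show ?thesis by linarith
  next
    case False
    then have m: "m \<ge> M" "m \<ge> 2" by auto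
    have "real (s m) \<le> exp (B * (real m * ln (real m)))"
    proof (cases "s m = 0")
      case False
      have "ln (real (s m)) < B * (real m * ln (real m))"
        using M[OF m(1)] m(2) by (simp add: divide_less_eq)
      then show ?thesis using False by (metis exp_less_mono exp_ln of_nat_0_less_iff neq0_conv less_imp_le)
    qed simp
    also have "\<dots> \<le> C * exp (B * (real m * ln (real m)))" using C by simp
    finally show ?thesis .
  qed
  then show ?thesis using C by blast
qed

lemma power_le_exp_of_mult_le:
  fixes m a c n :: nat
  assumes m: "1 \<le> m" and ma: "m * a \<le> n"
  shows "real m ^ (a * c) \<le> exp (real c * real n)"
proof -
  have "real a * ln (real m) \<le> real a * real m"
    using m ln_le_minus_one[of "real m"] by (intro mult_left_mono) auto
  also have "\<dots> \<le> real n" using ma by (simp add: mult.commute flip: of_nat_mult)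
  finally have "real c * (real a * ln (real m)) \<le> real c * real n"
    by (rule mult_left_mono) simp
  then have exponent: "real (a * c) * ln (real m) \<le> real c * real n"
    by (simp add: algebra_simps)
  have "real m ^ (a * c) = exp (ln (real m)) ^ (a * c)" using m by simp
  also have "\<dots> = exp (real (a * c) * ln (real m))" by (rule exp_of_nat_mult[symmetric])
  also have "\<dots> \<le> exp (real c * real n)" using exponent by simp
  finally show ?thesis .
qed

lemma convolution_term_bound:
  fixes s1 s2 :: "nat \<Rightarrow> nat" and B C :: real and c n m a :: nat
  assumes C: "C \<ge> 1" and B: "B > 0"
    and b1: "real (s1 m) \<le> C * exp (B * (real m * ln (real m)))"
    and b2: "real (s2 a) \<le> C * exp (B * (real a * ln (real a)))"
    and m: "1 \<le> m" and a: "1 \<le> a" and ma: "m * a \<le> n"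
  shows "real (s1 m * s2 a * m ^ (a * c))
           \<le> C * C * exp (B * ((real n + 1) * ln (real n)) + real c * real n)"
proof -
  have "m * 1 \<le> m * a" by (rule mult_le_mono2[OF a])
  moreover have "1 * a \<le> m * a" by (rule mult_le_mono1[OF m])
  ultimately have mn: "m \<le> n" "a \<le> n" using ma by linarith+
  have raise: "C * exp (B * (real k * ln (real k))) \<le> C * exp (B * (real k * ln (real n)))"
    if "1 \<le> k" "k \<le> n" for k
  proof -
    have "ln (real k) \<le> ln (real n)" using that by simp
    then have "B * (real k * ln (real k)) \<le> B * (real k * ln (real n))"
      using B by (intro mult_left_mono) auto
    then show ?thesis using C by simp
  qed
  have e1: "real (s1 m) \<le> C * exp (B * (real m * ln (real n)))"
    using b1 raise[OF m mn(1)] by linarith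
  have e2: "real (s2 a) \<le> C * exp (B * (real a * ln (real n)))"
    using b2 raise[OF a mn(2)] by linarith
  have e3: "real m ^ (a * c) \<le> exp (real c * real n)" by (rule power_le_exp_of_mult_le[OF m ma])
  have "(real m - 1) * (real a - 1) \<ge> 0" using m a by simp
  then have "real m + real a \<le> real n + 1"
    using ma by (simp add: algebra_simps flip: of_nat_mult)
  then have "B * ((real m + real a) * ln (real n)) \<le> B * ((real n + 1) * ln (real n))"
    using B mn m by (intro mult_left_mono mult_right_mono) auto
  then have "C * exp (B * (real m * ln (real n))) * (C * exp (B * (real a * ln (real n))))
      * exp (real c * real n) \<le> C * C * exp (B * ((real n + 1) * ln (real n)) + real c * real n)"
    using C by (simp add: algebra_simps flip: exp_add)
  moreover have "real (s1 m * s2 a * m ^ (a * c)) \<le> C * exp (B * (real m * ln (real n)))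
      * (C * exp (B * (real a * ln (real n)))) * exp (real c * real n)"
    using e1 e2 e3 by (simp add: mult_mono)
  ultimately show ?thesis by linarith
qed

lemma convolution_sum_bound:
  fixes s1 s2 :: "nat \<Rightarrow> nat" and B C :: real and c n :: nat
  assumes C: "C \<ge> 1" and B: "B > 0"
    and b1: "\<And>m. real (s1 m) \<le> C * exp (B * (real m * ln (real m)))"
    and b2: "\<And>m. real (s2 m) \<le> C * exp (B * (real m * ln (real m)))"
  shows "real (\<Sum>m\<in>{1..n}. \<Sum>a\<in>{a\<in>{1..n}. m * a \<le> n}. s1 m * s2 a * m ^ (a * c))
     \<le> real n * real n * (C * C * exp (B * ((real n + 1) * ln (real n)) + real c * real n))"
proof -
  define T where "T = C * C * exp (B * ((real n + 1) * ln (real n)) + real c * real n)"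
  have term_le: "real (s1 m * s2 a * m ^ (a * c)) \<le> T"
    if "m \<in> {1..n}" "a \<in> {a\<in>{1..n}. m * a \<le> n}" for m a
    unfolding T_def using that by (intro convolution_term_bound[OF C B b1 b2]) simp_all
  have inner_le: "(\<Sum>a\<in>{a\<in>{1..n}. m * a \<le> n}. T) \<le> real n * T" for m
  proof -
    have "card {a\<in>{1..n}. m * a \<le> n} \<le> card {1..n}" by (rule card_mono) auto
    then have "real (card {a\<in>{1..n}. m * a \<le> n}) \<le> real n" by simp
    moreover have "0 \<le> T" using C by (simp add: T_def)
    ultimately show ?thesis by (simp add: mult_right_mono)
  qed
  have "real (\<Sum>m\<in>{1..n}. \<Sum>a\<in>{a\<in>{1..n}. m * a \<le> n}. s1 m * s2 a * m ^ (a * c))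
      = (\<Sum>m\<in>{1..n}. \<Sum>a\<in>{a\<in>{1..n}. m * a \<le> n}. real (s1 m * s2 a * m ^ (a * c)))"
    by (simp only: of_nat_sum)
  also have "\<dots> \<le> (\<Sum>m\<in>{1..n}. \<Sum>a\<in>{a\<in>{1..n}. m * a \<le> n}. T)"
    by (intro sum_mono) (blast intro: term_le)
  also have "\<dots> \<le> (\<Sum>m\<in>{1..n}. real n * T)" by (intro sum_mono inner_le)
  finally show ?thesis by (simp add: T_def)
qed

lemma ln_ratio_mono:
  fixes k l n :: nat
  assumes "k \<le> l"
  shows "ln (real k) / (real n * ln (real n)) \<le> ln (real l) / (real n * ln (real n))"
proof (rule divide_right_mono)
  show "ln (real k) \<le> ln (real l)" using assms by (cases "k = 0"; cases "l = 0") auto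
  show "0 \<le> real n * ln (real n)" by (cases "n = 0") auto
qed

lemma ln_le_of_convolution_bound:
  fixes s1 s2 :: "nat \<Rightarrow> nat" and B C :: real and c n k :: nat
  assumes C: "C \<ge> 1" and B: "B > 0"
    and b1: "\<And>m. real (s1 m) \<le> C * exp (B * (real m * ln (real m)))"
    and b2: "\<And>m. real (s2 m) \<le> C * exp (B * (real m * ln (real m)))"
    and k: "k \<le> (\<Sum>m\<in>{1..n}. \<Sum>a\<in>{a\<in>{1..n}. m * a \<le> n}. s1 m * s2 a * m ^ (a * c))"
    and n: "n \<ge> 2"
  shows "ln (real k) \<le> 2 * ln (real n) + 2 * ln C + B * ((real n + 1) * ln (real n)) + real c * real n"
proof -
  define E where "E = B * ((real n + 1) * ln (real n)) + real c * real n"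
  have "ln (real k) \<le> ln (real n * real n * (C * C * exp E))"
  proof (cases "k = 0")
    case False
    then show ?thesis
      using order_trans[OF of_nat_mono[OF k] convolution_sum_bound[OF C B b1 b2]] by (simp add: E_def)
  next
    case True
    have "0 \<le> E" using B n by (simp add: E_def)
    then have "1 * 1 * (1 * 1 * 1) \<le> real n * real n * (C * C * exp E)"
      using C n by (intro mult_mono) auto
    then show ?thesis using True by simp
  qed
  also have "\<dots> = 2 * ln (real n) + 2 * ln C + E" using n C by (simp add: ln_mult)
  finally show ?thesis by (simp add: E_def)
qed

theorem tendsto_growth_of_convolution_bound:
  fixes s1 s2 s :: "nat \<Rightarrow> nat" and c :: nat and \<beta>1 \<beta>2 :: real
  assumes lim1: "(\<lambda>n. ln (real (s1 n)) / (real n * ln (real n))) \<longlonglongrightarrow> \<beta>1"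
    and lim2: "(\<lambda>n. ln (real (s2 n)) / (real n * ln (real n))) \<longlonglongrightarrow> \<beta>2"
    and pos: "\<beta>1 > 0" "\<beta>2 > 0"
    and low: "\<And>n. s1 n \<le> s n" "\<And>n. s2 n \<le> s n"
    and up: "\<And>n. s n \<le> (\<Sum>m\<in>{1..n}. \<Sum>a\<in>{a\<in>{1..n}. m * a \<le> n}. s1 m * s2 a * m ^ (a * c))"
  shows "(\<lambda>n. ln (real (s n)) / (real n * ln (real n))) \<longlonglongrightarrow> max \<beta>1 \<beta>2"
proof (rule order_tendstoI)
  fix y assume "y < max \<beta>1 \<beta>2"
  then consider "y < \<beta>1" | "y < \<beta>2" by (auto simp: less_max_iff_disj)
  then show "\<forall>\<^sub>F n in sequentially. y < ln (real (s n)) / (real n * ln (real n))"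
  proof cases
    case 1
    have "\<forall>\<^sub>F n in sequentially. y < ln (real (s1 n)) / (real n * ln (real n))"
      using order_tendstoD(1)[OF lim1 1] .
    then show ?thesis by (rule eventually_mono) (rule less_le_trans[OF _ ln_ratio_mono[OF low(1)]])
  next
    case 2
    have "\<forall>\<^sub>F n in sequentially. y < ln (real (s2 n)) / (real n * ln (real n))"
      using order_tendstoD(1)[OF lim2 2] .
    then show ?thesis by (rule eventually_mono) (rule less_le_trans[OF _ ln_ratio_mono[OF low(2)]])
  qed
next
  fix y assume y: "max \<beta>1 \<beta>2 < y"
  define B where "B = (max \<beta>1 \<beta>2 + y) / 2"
  have B: "0 < B" "\<beta>1 < B" "\<beta>2 < B" "B < y" using y pos by (auto simp: B_def)
  obtain C1 C2 where C1: "C1 \<ge> 1" "\<And>m. real (s1 m) \<le> C1 * exp (B * (real m * ln (real m)))"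
    and C2: "C2 \<ge> 1" "\<And>m. real (s2 m) \<le> C2 * exp (B * (real m * ln (real m)))"
    using exp_bound_of_tendsto[OF lim1 B(2,1)] exp_bound_of_tendsto[OF lim2 B(3,1)] by blast
  define C where "C = max C1 C2"
  have C: "C \<ge> 1" using C1 by (simp add: C_def)
  have b: "real (s1 m) \<le> C * exp (B * (real m * ln (real m)))"
    "real (s2 m) \<le> C * exp (B * (real m * ln (real m)))" for m
  proof -
    have "C1 * exp (B * (real m * ln (real m))) \<le> C * exp (B * (real m * ln (real m)))"
      "C2 * exp (B * (real m * ln (real m))) \<le> C * exp (B * (real m * ln (real m)))"
      by (simp_all add: C_def)
    then show "real (s1 m) \<le> C * exp (B * (real m * ln (real m)))"
      "real (s2 m) \<le> C * exp (B * (real m * ln (real m)))"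
      using C1(2)[of m] C2(2)[of m] by linarith+
  qed
  define U where "U n = (2 * ln (real n) + 2 * ln C + B * ((real n + 1) * ln (real n)) + real c * real n)
      / (real n * ln (real n))" for n
  have "U \<longlonglongrightarrow> B" unfolding U_def by real_asymp
  then have "\<forall>\<^sub>F n in sequentially. U n < y" using B(4) by (rule order_tendstoD(2))
  moreover have "ln (real (s n)) / (real n * ln (real n)) \<le> U n" if n: "n \<ge> 2" for n
    unfolding U_def using ln_le_of_convolution_bound[OF C B(1) b up n] n
    by (intro divide_right_mono) auto
  then have "\<forall>\<^sub>F n in sequentially. ln (real (s n)) / (real n * ln (real n)) \<le> U n"
    unfolding eventually_sequentially by blast
  ultimately show "\<forall>\<^sub>F n in sequentially. ln (real (s n)) / (real n * ln (real n)) < y"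
    by eventually_elim (rule le_less_trans)
qed

section \<open>Clique collections of a join\<close>

definition induced_rel :: "'a graph \<Rightarrow> 'a set \<Rightarrow> ('a \<times> 'a) set" where
  "induced_rel G C = {(u, v). u \<in> C \<and> v \<in> C \<and> adj G u v}"

lemma induced_component_eq: "induced_component G C x = {y \<in> C. (x, y) \<in> (induced_rel G C)\<^sup>*}"
  by (simp add: induced_component_def induced_rel_def)

lemma rtrancl_map_prod_image: "(x, y) \<in> R\<^sup>* \<Longrightarrow> (f x, f y) \<in> (map_prod f f ` R)\<^sup>*"
proof (induction rule: rtrancl_induct)
  case (step y z)
  then have "(f y, f z) \<in> map_prod f f ` R" by force
  with step.IH show ?case by (rule rtrancl_into_rtrancl)
qed simp

lemma rtrancl_map_prod_image_iff:
  assumes "inj f"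
  shows "(f x, f y) \<in> (map_prod f f ` R)\<^sup>* \<longleftrightarrow> (x, y) \<in> R\<^sup>*"
proof
  assume "(f x, f y) \<in> (map_prod f f ` R)\<^sup>*"
  then have "(inv_into UNIV f (f x), inv_into UNIV f (f y))
      \<in> (map_prod (inv_into UNIV f) (inv_into UNIV f) ` map_prod f f ` R)\<^sup>*"
    by (rule rtrancl_map_prod_image)
  then show "(x, y) \<in> R\<^sup>*" using assms by (simp add: image_image prod.map_comp comp_def)
qed (rule rtrancl_map_prod_image)

lemma finite_clique_collections: "finite (verts G) \<Longrightarrow> finite {C. clique_collection G C}"
  by (rule finite_subset[of _ "Pow (verts G)"]) (auto simp: clique_collection_def)

lemma clique_collection_empty: "clique_collection G {}"
  by (simp add: clique_collection_def induced_components_def)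

lemma cc_weight_le_gamma: "finite (verts G) \<Longrightarrow> clique_collection G C \<Longrightarrow> cc_weight G C \<le> gamma G"
  unfolding gamma_def by (rule Max_ge) (auto intro: finite_clique_collections)

lemma gamma_attained:
  assumes "finite (verts G)"
  obtains C where "clique_collection G C" "cc_weight G C = gamma G"
proof -
  have "gamma G \<in> cc_weight G ` {C. clique_collection G C}"
    unfolding gamma_def using finite_clique_collections[OF assms] clique_collection_empty[of G]
    by (intro Max_in) auto
  then show ?thesis using that by auto
qed

locale induced_embedding =
  fixes G :: "'a graph" and G' :: "'c graph" and f :: "'a \<Rightarrow> 'c"
  assumes inj: "inj f" and maps_verts: "f ` verts G \<subseteq> verts G'"
    and adj_iff: "\<And>x y. x \<in> verts G \<Longrightarrow> y \<in> verts G \<Longrightarrow> adj G' (f x) (f y) \<longleftrightarrow> adj G x y"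
begin

lemma induced_rel_image:
  assumes "D \<subseteq> verts G"
  shows "induced_rel G' (f ` D) = map_prod f f ` induced_rel G D"
  using adj_iff[OF subsetD[OF assms] subsetD[OF assms]] by (auto simp: induced_rel_def image_iff)

lemma induced_component_image:
  "D \<subseteq> verts G \<Longrightarrow> x \<in> D \<Longrightarrow> induced_component G' (f ` D) (f x) = f ` induced_component G D x"
  unfolding induced_component_eq using induced_rel_image
    rtrancl_map_prod_image_iff[OF inj, of x _ "induced_rel G D"] inj
  by (auto simp: inj_def)

lemma induced_components_image:
  "D \<subseteq> verts G \<Longrightarrow> induced_components G' (f ` D) = image f ` induced_components G D"
  unfolding induced_components_def using induced_component_image by (auto simp: image_image)

lemma clique_collection_image_iff:
  assumes D: "D \<subseteq> verts G"
  shows "clique_collection G' (f ` D) \<longleftrightarrow> clique_collection G D"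
proof -
  have "(\<forall>v\<in>f ` K. \<forall>w\<in>f ` K. v \<noteq> w \<longrightarrow> adj G' v w) \<longleftrightarrow> (\<forall>v\<in>K. \<forall>w\<in>K. v \<noteq> w \<longrightarrow> adj G v w)"
    if "K \<in> induced_components G D" for K
  proof -
    have "K \<subseteq> verts G" using that D by (auto simp: induced_components_def induced_component_def)
    then have "(f v \<noteq> f w \<longrightarrow> adj G' (f v) (f w)) \<longleftrightarrow> (v \<noteq> w \<longrightarrow> adj G v w)"
      if "v \<in> K" "w \<in> K" for v w
      using that adj_iff[of v w] inj_eq[OF inj, of v w] by blast
    then show ?thesis by blast
  qed
  moreover have "f ` D \<subseteq> verts G'" using D maps_verts by blast
  ultimately show ?thesis using D by (simp add: clique_collection_def induced_components_image)
qed

lemma cc_weight_image: "D \<subseteq> verts G \<Longrightarrow> cc_weight G' (f ` D) = cc_weight G D"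
  unfolding cc_weight_def induced_components_image using inj
  by (simp add: sum.reindex inj_on_def inj_image_eq_iff card_image[OF inj_on_subset[OF inj subset_UNIV]])

lemma gamma_le:
  assumes "finite (verts G)" "finite (verts G')"
  shows "gamma G \<le> gamma G'"
proof -
  obtain D where D: "clique_collection G D" "cc_weight G D = gamma G"
    using gamma_attained[OF assms(1)] .
  moreover have "D \<subseteq> verts G" using D(1) by (simp add: clique_collection_def)
  ultimately show ?thesis
    using cc_weight_le_gamma[OF assms(2)] clique_collection_image_iff cc_weight_image by metis
qed

lemma cc_weight_in_image_le_gamma:
  assumes "finite (verts G)" "clique_collection G' C" "C \<subseteq> f ` verts G"
  shows "cc_weight G' C \<le> gamma G"
proof -
  define D where "D = f -` C \<inter> verts G"
  have D: "D \<subseteq> verts G" "f ` D = C" using assms(3) by (auto simp: D_def)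
  then show ?thesis
    using cc_weight_le_gamma[OF assms(1)] clique_collection_image_iff[OF D(1)]
      cc_weight_image[OF D(1)] assms(2) by metis
qed

end

text \<open>Two non-adjacent vertices form a clique collection of weight \<open>1/2 + 1/2\<close>.\<close>

lemma one_le_gamma_if_not_complete:
  assumes G: "finite_simple_graph G" and "\<not> complete_graph G"
  shows "1 \<le> gamma G"
proof -
  obtain v w where vw: "v \<in> verts G" "w \<in> verts G" "v \<noteq> w" "\<not> adj G v w"
    using assms(2) by (auto simp: complete_graph_def)
  then have "\<not> adj G w v" "\<not> adj G v v" "\<not> adj G w w"
    using G by (auto simp: finite_simple_graph_def)
  with vw have "induced_rel G {v, w} = {}" by (auto simp: induced_rel_def)
  then have "induced_component G {v, w} v = {v}" "induced_component G {v, w} w = {w}"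
    unfolding induced_component_eq by auto
  then have comps: "induced_components G {v, w} = {{v}, {w}}"
    by (simp add: induced_components_def)
  have "clique_collection G {v, w}" using vw comps by (auto simp: clique_collection_def)
  moreover have "cc_weight G {v, w} = 1" using vw(3) by (simp add: cc_weight_def comps)
  ultimately show ?thesis
    using cc_weight_le_gamma[of G "{v, w}"] G by (simp add: finite_simple_graph_def)
qed

text \<open>In the join every vertex of one side is adjacent to every vertex of the other, so a clique
  collection meeting both sides is connected and has weight below \<open>1\<close>.\<close>

lemma cc_weight_join_le_one:
  assumes a: "Inl a \<in> C" and b: "Inr b \<in> C"
  shows "cc_weight (graph_join G1 G2) C \<le> 1"
proof -
  let ?R = "induced_rel (graph_join G1 G2) C"
  have cross: "(x, y) \<in> ?R" if "x \<in> C" "y \<in> C" "x \<in> range Inl \<longleftrightarrow> y \<in> range Inr" for x y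
    using that by (cases x; cases y) (auto simp: induced_rel_def graph_join_def adj_def)
  have "(x, y) \<in> ?R\<^sup>*" if x: "x \<in> C" and y: "y \<in> C" for x y
  proof (cases "x \<in> range Inl \<longleftrightarrow> y \<in> range Inr")
    case True
    then show ?thesis using cross[OF x y] by blast
  next
    case False
    define z where "z = (if x \<in> range Inl then Inr b else Inl a)"
    have "z \<in> C" "x \<in> range Inl \<longleftrightarrow> z \<in> range Inr" "z \<in> range Inl \<longleftrightarrow> y \<in> range Inr"
      using a b False by (auto simp: z_def)
    then show ?thesis using cross[OF x] cross[OF _ y] by (meson converse_rtrancl_into_rtrancl r_into_rtrancl)
  qed
  then have "induced_components (graph_join G1 G2) C = {C}"
    using a by (auto simp: induced_components_def induced_component_eq)
  then show ?thesis by (simp add: cc_weight_def)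
qed

theorem gamma_join:
  assumes G1: "finite_simple_graph G1" and G2: "finite_simple_graph G2"
    and not_complete: "\<not> complete_graph G1 \<or> \<not> complete_graph G2"
  shows "gamma (graph_join G1 G2) = max (gamma G1) (gamma G2)"
proof -
  let ?J = "graph_join G1 G2"
  have fin: "finite (verts G1)" "finite (verts G2)" "finite (verts ?J)"
    using G1 G2 by (simp_all add: finite_simple_graph_def graph_join_def verts_def)
  interpret left: induced_embedding G1 ?J Inl
    by unfold_locales (auto simp: graph_join_def adj_def verts_def)
  interpret right: induced_embedding G2 ?J Inr
    by unfold_locales (auto simp: graph_join_def adj_def verts_def)
  have "gamma ?J \<le> max (gamma G1) (gamma G2)"
  proof -
    obtain C where C: "clique_collection ?J C" "cc_weight ?J C = gamma ?J"
      using gamma_attained[OF fin(3)] .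
    then have "C \<subseteq> Inl ` verts G1 \<union> Inr ` verts G2"
      by (simp add: clique_collection_def graph_join_def verts_def)
    then consider (both) a b where "Inl a \<in> C" "Inr b \<in> C"
      | (left) "C \<subseteq> Inl ` verts G1" | (right) "C \<subseteq> Inr ` verts G2"
      by blast
    then show ?thesis
    proof cases
      case both
      then have "gamma ?J \<le> 1" using cc_weight_join_le_one C(2) by metis
      also have "1 \<le> max (gamma G1) (gamma G2)"
        using not_complete one_le_gamma_if_not_complete[OF G1] one_le_gamma_if_not_complete[OF G2]
        by (auto simp: le_max_iff_disj)
      finally show ?thesis .
    next
      case left
      then show ?thesis using left.cc_weight_in_image_le_gamma[OF fin(1) C(1)] C(2) by simp
    next
      case right
      then show ?thesis using right.cc_weight_in_image_le_gamma[OF fin(2) C(1)] C(2) by simp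
    qed
  qed
  then show ?thesis using left.gamma_le[OF fin(1,3)] right.gamma_le[OF fin(2,3)] by simp
qed

theorem mainTheorem3:
  fixes G1 :: "'a graph" and G2 :: "'b graph" and \<beta>1 \<beta>2 :: real
  assumes "finite_simple_graph G1" and "finite_simple_graph G2"
    and "\<beta>1 > 0" and "\<beta>2 > 0"
    and "(\<lambda>n. ln (real (num_subgroups_index (RACG G1) n)) / (real n * ln (real n)))
           \<longlonglongrightarrow> \<beta>1"
    and "(\<lambda>n. ln (real (num_subgroups_index (RACG G2) n)) / (real n * ln (real n)))
           \<longlonglongrightarrow> \<beta>2"
  shows "((\<lambda>n. ln (real (num_subgroups_index (RACG (graph_join G1 G2)) n)) / (real n * ln (real n)))
           \<longlonglongrightarrow> max \<beta>1 \<beta>2) \<and>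
         ((\<not> complete_graph G1 \<or> \<not> complete_graph G2) \<longrightarrow>
           gamma (graph_join G1 G2) = max (gamma G1) (gamma G2))"
proof -
  have "finite (verts G1)" "finite (verts G2)"
    using assms(1,2) by (simp_all add: finite_simple_graph_def)
  note bounds = num_subgroups_index_RACG_join_bounds[OF this]
  have "(\<lambda>n. ln (real (num_subgroups_index (RACG (graph_join G1 G2)) n)) / (real n * ln (real n)))
      \<longlonglongrightarrow> max \<beta>1 \<beta>2"
    by (rule tendsto_growth_of_convolution_bound[OF assms(5,6,3,4) bounds])
  then show ?thesis using gamma_join[OF assms(1,2)] by simp
qed

end
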